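(* Consider the online linear regression problem with delayed labels described in the context, and assume $\|z_t\|_2\le Z$ and $|y_t|\le Y$ for all $t\in[T]$, for some $Y,Z\ge0$. Let $0<\eta_0\le\eta_1\le\dots\le\eta_T$. Consider the learner (delayed Vovk–Azoury–Warmuth forecaster with clipping): set $\rho_1=0$; at each round $t$, after observing $z_t$, compute $$x_t=\arg\min_{x\in\mathbb{R}^n}\ \sum_{\tau\in o_t}-y_\tau\langle z_\tau,x\rangle+\frac{\eta_t}{2}\|x\|_2^2+\frac12\sum_{\tau=1}^{t}\langle z_\tau,x\rangle^2,$$ play $\tilde x_t=x_t\cdot\min\left\{\frac{\rho_t}{|\langle z_t,x_t\rangle|},1\right\}$ (with $\tilde x_t=x_t$ if $\langle z_t,x_t\rangle=0$), then receive $y_\tau$ for all $\tau\in o_{t+1}\setminus o_t$ and set $\rho_{t+1}=\max_{\tau\in o_{t+1}}|y_\tau|$ (with $\max\emptyset=0$). Then for every $u\in\mathbb{R}^n$, $$\mathrm{Reg}_T(u)\le\frac{\eta_T}{2}\|u\|_2^2+nY^2\ln\left(1+\frac{Z^2T}{\eta_0 n}\right)+\mathcal{O}\left(Y^2\left(\sigma_{\max}+\min\{M_1,M_2\}\right)\right),$$ where $M_1=n\,d_{\max}\ln\left(1+\frac{Z^2T}{\eta_0 n}\right)$ and $M_2=Z^2\sum_{t=1}^T\frac{|m_t|}{\eta_t}$, and $\mathcal{O}$ hides only an absolute numerical constant.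
   Context: Online linear regression with delayed labels: $T\ge1$, $n\ge1$ integers, $[T]=\{1,\dots,T\}$. At each round $t\in[T]$ the learner first observes a feature vector $z_t\in\mathbb{R}^n$, then plays a point $\tilde x_t\in\mathbb{R}^n$ (unconstrained) and incurs the loss $f_t(\tilde x_t)$ where $f_t(x)=\frac12(\langle z_t,x\rangle-y_t)^2$ for a label $y_t\in\mathbb{R}$; the label $y_t$ is revealed only at the end of round $t+d_t$, where $d_t\in\{0,1,2,\dots\}$ is an arbitrary delay unknown to the learner, with $t+d_t\le T$ for all $t$. For $t\ge1$ define $o_t=\{\tau\in\mathbb{N}:\tau+d_\tau<t\}\subseteq[t-1]$ and $m_t=[t-1]\setminus o_t$; $\sigma_{\max}=\max_{t\in[T]}|m_t|$ and $d_{\max}=\max_{t\in[T]}d_t$. The regret against $u\in\mathbb{R}^n$ is $\mathrm{Reg}_T(u)=\sum_{t=1}^T(f_t(\tilde x_t)-f_t(u))$. The learning rate $\eta_t$ used at round $t$ may depend on the information available at the start of round $t$. *)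

theory Defs
  imports Complex_Main
begin

text \<open>Vectors of R^n are represented as functions nat => real; only the
components i < n are relevant (inner product and norm sum over i < n).\<close>

definition vinner :: "nat \<Rightarrow> (nat \<Rightarrow> real) \<Rightarrow> (nat \<Rightarrow> real) \<Rightarrow> real" where
  "vinner n a b = (\<Sum>i<n. a i * b i)"

definition vnorm :: "nat \<Rightarrow> (nat \<Rightarrow> real) \<Rightarrow> real" where
  "vnorm n a = sqrt (\<Sum>i<n. (a i)\<^sup>2)"

definition in_Rn :: "nat \<Rightarrow> (nat \<Rightarrow> real) \<Rightarrow> bool" where
  "in_Rn n x \<longleftrightarrow> (\<forall>i\<ge>n. x i = 0)"

definition sqloss :: "nat \<Rightarrow> (nat \<Rightarrow> nat \<Rightarrow> real) \<Rightarrow> (nat \<Rightarrow> real) \<Rightarrow> nat \<Rightarrow> (nat \<Rightarrow> real) \<Rightarrow> real" where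
  "sqloss n z y t x = (vinner n (z t) x - y t)\<^sup>2 / 2"

definition obs :: "(nat \<Rightarrow> nat) \<Rightarrow> nat \<Rightarrow> nat set" where
  "obs d t = {\<tau>. 1 \<le> \<tau> \<and> \<tau> + d \<tau> < t}"

definition miss :: "(nat \<Rightarrow> nat) \<Rightarrow> nat \<Rightarrow> nat set" where
  "miss d t = {1..t-1} - obs d t"

definition sigma_max :: "nat \<Rightarrow> (nat \<Rightarrow> nat) \<Rightarrow> nat" where
  "sigma_max T d = Max ((\<lambda>t. card (miss d t)) ` {1..T})"

definition d_max :: "nat \<Rightarrow> (nat \<Rightarrow> nat) \<Rightarrow> nat" where
  "d_max T d = Max (d ` {1..T})"

definition vaw_obj :: "nat \<Rightarrow> (nat \<Rightarrow> nat \<Rightarrow> real) \<Rightarrow> (nat \<Rightarrow> real) \<Rightarrow> (nat \<Rightarrow> nat)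
     \<Rightarrow> (nat \<Rightarrow> real) \<Rightarrow> nat \<Rightarrow> (nat \<Rightarrow> real) \<Rightarrow> real" where
  "vaw_obj n z y d \<eta> t x =
     (\<Sum>\<tau>\<in>obs d t. - y \<tau> * vinner n (z \<tau>) x) + \<eta> t / 2 * (vnorm n x)\<^sup>2
     + (\<Sum>\<tau>=1..t. (vinner n (z \<tau>) x)\<^sup>2) / 2"

definition vaw_x :: "nat \<Rightarrow> (nat \<Rightarrow> nat \<Rightarrow> real) \<Rightarrow> (nat \<Rightarrow> real) \<Rightarrow> (nat \<Rightarrow> nat)
     \<Rightarrow> (nat \<Rightarrow> real) \<Rightarrow> nat \<Rightarrow> (nat \<Rightarrow> real)" where
  "vaw_x n z y d \<eta> t = (THE x. in_Rn n x \<and>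
      (\<forall>x'. in_Rn n x' \<longrightarrow> vaw_obj n z y d \<eta> t x \<le> vaw_obj n z y d \<eta> t x'))"

text \<open>Clipping threshold rho_t = max_{tau in o_t} |y_tau| (max of empty set = 0);
  this gives rho_1 = 0 and rho_{t+1} = max_{tau in o_{t+1}} |y_tau|.\<close>
definition rho :: "(nat \<Rightarrow> real) \<Rightarrow> (nat \<Rightarrow> nat) \<Rightarrow> nat \<Rightarrow> real" where
  "rho y d t = (if obs d t = {} then 0 else Max ((\<lambda>\<tau>. \<bar>y \<tau>\<bar>) ` obs d t))"

definition vaw_play :: "nat \<Rightarrow> (nat \<Rightarrow> nat \<Rightarrow> real) \<Rightarrow> (nat \<Rightarrow> real) \<Rightarrow> (nat \<Rightarrow> nat)
     \<Rightarrow> (nat \<Rightarrow> real) \<Rightarrow> nat \<Rightarrow> (nat \<Rightarrow> real)" where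
  "vaw_play n z y d \<eta> t =
     (let x = vaw_x n z y d \<eta> t; p = vinner n (z t) x in
      if p = 0 then x else (\<lambda>i. min (rho y d t / \<bar>p\<bar>) 1 * x i))"

definition regret :: "nat \<Rightarrow> nat \<Rightarrow> (nat \<Rightarrow> nat \<Rightarrow> real) \<Rightarrow> (nat \<Rightarrow> real) \<Rightarrow> (nat \<Rightarrow> nat)
     \<Rightarrow> (nat \<Rightarrow> real) \<Rightarrow> (nat \<Rightarrow> real) \<Rightarrow> real" where
  "regret n T z y d \<eta> u =
     (\<Sum>t=1..T. sqloss n z y t (vaw_play n z y d \<eta> t) - sqloss n z y t u)"

end

(*
  Let A_t = eta_t I + sum_{s <= t} z_s z_s^T.  The delayed forecaster predicts with A_t^-1
  applied to the labels observed so far, the undelayed Vovk-Azoury-Warmuth forecaster with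
  A_t^-1 applied to all labels y_s, s < t.  The latter has regret at most
  eta_T/2 |u|^2 + Y^2/2 sum_t z_t^T A_t^-1 z_t, and the elliptical potential lemma bounds the
  sum of these leverages by n ln (1 + Z^2 T / (eta_0 n)).

  The two forecasts differ by sum_{tau in m_t} y_tau z_tau^T A_t^-1 z_t.  This is bounded
  either through leverages, since every round is missing in at most d_max later rounds, or by
  Y Z^2 |m_t| / eta_t.  Clipping at rho_t, the largest observed |y_tau|, costs at most 5 Y times
  this difference plus (y_t^2 - rho_t^2)^+, and a top-k exchange argument bounds the sum of
  the latter by (sigma_max + 1) Y^2.  Without missing labels the forecasts coincide and the
  cost of clipping is bounded by the logarithmic term itself.
*)

theory Submission
  imports Defs "HOL-Analysis.Harmonic_Numbers"
begin

section \<open>Inner products and regularised Gram forms\<close>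

lemma vinner_commute: "vinner n a b = vinner n b a"
  unfolding vinner_def by (simp add: mult.commute)

lemma vinner_add_left: "vinner n (\<lambda>i. a i + b i) c = vinner n a c + vinner n b c"
  unfolding vinner_def by (simp add: distrib_right sum.distrib)

lemma vinner_add_right: "vinner n c (\<lambda>i. a i + b i) = vinner n c a + vinner n c b"
  unfolding vinner_def by (simp add: distrib_left sum.distrib)

lemma vinner_diff_left: "vinner n (\<lambda>i. a i - b i) c = vinner n a c - vinner n b c"
  unfolding vinner_def by (simp add: left_diff_distrib sum_subtractf)

lemma vinner_diff_right: "vinner n c (\<lambda>i. a i - b i) = vinner n c a - vinner n c b"
  unfolding vinner_def by (simp add: right_diff_distrib sum_subtractf)

lemma vinner_scale_left: "vinner n (\<lambda>i. r * a i) c = r * vinner n a c"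
  unfolding vinner_def by (simp add: sum_distrib_left algebra_simps)

lemma vinner_scale_right: "vinner n c (\<lambda>i. r * a i) = r * vinner n c a"
  unfolding vinner_def by (simp add: sum_distrib_left algebra_simps)

lemmas vinner_bilinear =
  vinner_add_left vinner_add_right vinner_diff_left vinner_diff_right
  vinner_scale_left vinner_scale_right

lemma vinner_sum_left:
  "vinner n (\<lambda>i. \<Sum>s\<in>S. a s * v s i) x = (\<Sum>s\<in>S. a s * vinner n (v s) x)"
  unfolding vinner_def
  by (simp add: sum_distrib_right sum_distrib_left sum.swap[of _ S] mult.assoc)

lemma vinner_self_nonneg: "0 \<le> vinner n a a"
  unfolding vinner_def by (simp add: sum_nonneg)

lemma vinner_self_eq_0_iff: "vinner n a a = 0 \<longleftrightarrow> (\<forall>i<n. a i = 0)"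
  unfolding vinner_def by (auto simp: sum_nonneg_eq_0_iff)

lemma vinner_Suc: "vinner (Suc k) a b = vinner k a b + a k * b k"
  unfolding vinner_def by simp

lemma vnorm_sq: "(vnorm n a)\<^sup>2 = vinner n a a"
  unfolding vnorm_def vinner_def by (simp add: sum_nonneg power2_eq_square)

lemma in_Rn_eqI: "in_Rn n a \<Longrightarrow> in_Rn n b \<Longrightarrow> (\<And>i. i < n \<Longrightarrow> a i = b i) \<Longrightarrow> a = b"
  unfolding in_Rn_def by (metis not_le ext)

text \<open>\<open>gram n e z S\<close> is the bilinear form of \<open>A = e I + (\<Sum>s\<in>S. z\<^sub>s z\<^sub>s\<^sup>T)\<close> on \<open>\<real>\<^sup>n\<close>
  (only the coordinates \<open>i < n\<close> matter), so no matrix is ever formed: \<open>gram_solution n e z S c x\<close>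
  says \<open>x = A\<^sup>-\<^sup>1 c\<close>, \<open>gram_inv\<close> picks this solution, and \<open>dual_sqnorm n e z S v = v\<^sup>T A\<^sup>-\<^sup>1 v\<close>.\<close>

definition gram :: "nat \<Rightarrow> real \<Rightarrow> (nat \<Rightarrow> nat \<Rightarrow> real) \<Rightarrow> nat set
    \<Rightarrow> (nat \<Rightarrow> real) \<Rightarrow> (nat \<Rightarrow> real) \<Rightarrow> real" where
  "gram n e z S x x' = e * vinner n x x' + (\<Sum>s\<in>S. vinner n (z s) x * vinner n (z s) x')"

lemma gram_commute: "gram n e z S x x' = gram n e z S x' x"
  unfolding gram_def by (simp add: vinner_commute mult.commute)

lemma gram_add_left: "gram n e z S (\<lambda>i. a i + b i) c = gram n e z S a c + gram n e z S b c"
  unfolding gram_def by (simp add: vinner_bilinear algebra_simps sum.distrib)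

lemma gram_add_right: "gram n e z S c (\<lambda>i. a i + b i) = gram n e z S c a + gram n e z S c b"
  unfolding gram_def by (simp add: vinner_bilinear algebra_simps sum.distrib)

lemma gram_diff_left: "gram n e z S (\<lambda>i. a i - b i) c = gram n e z S a c - gram n e z S b c"
  unfolding gram_def by (simp add: vinner_bilinear algebra_simps sum_subtractf)

lemma gram_diff_right: "gram n e z S c (\<lambda>i. a i - b i) = gram n e z S c a - gram n e z S c b"
  unfolding gram_def by (simp add: vinner_bilinear algebra_simps sum_subtractf)

lemma gram_scale_left: "gram n e z S (\<lambda>i. r * a i) c = r * gram n e z S a c"
  unfolding gram_def by (simp add: vinner_bilinear algebra_simps sum_distrib_left)

lemma gram_scale_right: "gram n e z S c (\<lambda>i. r * a i) = r * gram n e z S c a"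
  unfolding gram_def by (simp add: vinner_bilinear algebra_simps sum_distrib_left)

lemmas gram_bilinear =
  gram_add_left gram_add_right gram_diff_left gram_diff_right gram_scale_left gram_scale_right

lemma gram_square_add:
  "gram n e z S (\<lambda>i. a i + r * b i) (\<lambda>i. a i + r * b i)
     = gram n e z S a a + 2 * r * gram n e z S a b + r\<^sup>2 * gram n e z S b b"
  by (simp add: gram_bilinear gram_commute[of n e z S b a] power2_eq_square algebra_simps)

lemma gram_insert:
  "finite S \<Longrightarrow> s \<notin> S \<Longrightarrow>
     gram n e z (insert s S) x x' = gram n e z S x x' + vinner n (z s) x * vinner n (z s) x'"
  unfolding gram_def by simp

lemma gram_self_ge: "e * vinner n x x \<le> gram n e z S x x"
  unfolding gram_def by (simp add: sum_nonneg)

lemma gram_self_nonneg: "0 \<le> e \<Longrightarrow> 0 \<le> gram n e z S x x"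
  by (meson gram_self_ge mult_nonneg_nonneg order_trans vinner_self_nonneg)

lemma gram_self_mono:
  assumes "e \<le> e'" "finite S'" "S \<subseteq> S'"
  shows "gram n e z S x x \<le> gram n e' z S' x x"
  unfolding gram_def using assms
  by (intro add_mono mult_right_mono sum_mono2) (auto simp: vinner_self_nonneg)

lemma gram_self_eq_0:
  assumes "0 < e" "gram n e z S x x \<le> 0"
  shows "\<forall>i<n. x i = 0"
proof -
  have "e * vinner n x x \<le> 0" using gram_self_ge assms(2) order_trans by blast
  then have "vinner n x x = 0"
    using assms(1) vinner_self_nonneg by (metis antisym mult_le_0_iff not_less)
  then show ?thesis by (simp add: vinner_self_eq_0_iff)
qed

lemma gram_abs_le:
  assumes "0 \<le> e"
  shows "2 * \<bar>gram n e z S a b\<bar> \<le> gram n e z S a a + gram n e z S b b"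
proof -
  have "0 \<le> gram n e z S (\<lambda>i. a i + r * b i) (\<lambda>i. a i + r * b i)" for r
    using gram_self_nonneg assms by blast
  from this[of 1] this[of "-1"] show ?thesis
    unfolding gram_square_add by (simp add: abs_le_iff)
qed

lemma quadratic_nonneg_discriminant:
  fixes A B C :: real
  assumes "\<And>r. 0 \<le> A + 2 * r * B + r\<^sup>2 * C" "0 \<le> C"
  shows "B\<^sup>2 \<le> A * C"
proof (cases "C = 0")
  case True
  have "B = 0"
  proof (rule ccontr)
    assume "B \<noteq> 0"
    have "0 \<le> A + 2 * (- (A + 1) / (2 * B)) * B"
      using assms(1)[of "- (A + 1) / (2 * B)"] True by simp
    also have "\<dots> = -1" using \<open>B \<noteq> 0\<close> by (simp add: field_simps)
    finally show False by simp
  qed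
  then show ?thesis using True by simp
next
  case False
  then have C: "C > 0" using assms(2) by simp
  have "0 \<le> A + 2 * (- B / C) * B + (- B / C)\<^sup>2 * C" by (rule assms(1))
  also have "\<dots> = A - B\<^sup>2 / C" using C by (simp add: field_simps power2_eq_square)
  finally show ?thesis using C by (simp add: field_simps)
qed

lemma gram_cauchy_schwarz:
  assumes "0 \<le> e"
  shows "(gram n e z S a b)\<^sup>2 \<le> gram n e z S a a * gram n e z S b b"
  using gram_self_nonneg[OF assms, of n z S "\<lambda>i. a i + _ * b i"] gram_self_nonneg[OF assms]
  unfolding gram_square_add by (intro quadratic_nonneg_discriminant) auto

definition gram_solution :: "nat \<Rightarrow> real \<Rightarrow> (nat \<Rightarrow> nat \<Rightarrow> real) \<Rightarrow> nat set
    \<Rightarrow> (nat \<Rightarrow> real) \<Rightarrow> (nat \<Rightarrow> real) \<Rightarrow> bool" where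
  "gram_solution n e z S c x \<longleftrightarrow> in_Rn n x \<and> (\<forall>x'. gram n e z S x x' = vinner n c x')"

lemma gram_solution_add_scaled:
  assumes "gram_solution n e z S c x" "gram_solution n e z S c' x'"
  shows "gram_solution n e z S (\<lambda>i. c i + r * c' i) (\<lambda>i. x i + r * x' i)"
  using assms unfolding gram_solution_def in_Rn_def by (simp add: gram_bilinear vinner_bilinear)

lemma gram_solution_exists:
  assumes "finite S" "0 < e"
  shows "\<exists>x. gram_solution n e z S c x"
  using assms(1)
proof (induction S arbitrary: c rule: finite_induct)
  case empty
  define x where "x i = (if i < n then c i / e else 0)" for i
  have "gram n e z {} x x' = vinner n c x'" for x'
    using assms(2) unfolding gram_def vinner_def x_def by (simp add: sum_distrib_left)
  moreover have "in_Rn n x" unfolding x_def in_Rn_def by simp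
  ultimately show ?case unfolding gram_solution_def by blast
next
  case (insert s S)
  obtain x where x: "gram_solution n e z S c x" using insert.IH by blast
  obtain v where v: "gram_solution n e z S (z s) v" using insert.IH by blast
  \<comment> \<open>Sherman--Morrison: the new rank-one term only corrects \<open>x\<close> along \<open>v = A\<^sup>-\<^sup>1 z\<^sub>s\<close>.\<close>
  define k where "k = vinner n (z s) x / (1 + vinner n (z s) v)"
  have "0 \<le> vinner n (z s) v"
    using v gram_self_nonneg[of e] assms(2) unfolding gram_solution_def by (metis less_imp_le)
  then have k: "vinner n (z s) x - k * vinner n (z s) v = k"
    unfolding k_def by (simp add: field_simps)
  have "gram_solution n e z S (\<lambda>i. c i + (- k) * z s i) (\<lambda>i. x i + (- k) * v i)"
    using x v by (rule gram_solution_add_scaled)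
  then have "gram_solution n e z (insert s S) c (\<lambda>i. x i - k * v i)"
    using insert.hyps k unfolding gram_solution_def
    by (simp add: gram_insert vinner_bilinear algebra_simps)
  then show ?case by blast
qed

definition gram_inv :: "nat \<Rightarrow> real \<Rightarrow> (nat \<Rightarrow> nat \<Rightarrow> real) \<Rightarrow> nat set
    \<Rightarrow> (nat \<Rightarrow> real) \<Rightarrow> (nat \<Rightarrow> real)" where
  "gram_inv n e z S c = (SOME x. gram_solution n e z S c x)"

lemma gram_inv_solution:
  "finite S \<Longrightarrow> 0 < e \<Longrightarrow> gram_solution n e z S c (gram_inv n e z S c)"
  unfolding gram_inv_def using gram_solution_exists by (metis someI_ex)

lemma gram_inv_gram:
  "finite S \<Longrightarrow> 0 < e \<Longrightarrow> gram n e z S (gram_inv n e z S c) x = vinner n c x"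
  using gram_inv_solution unfolding gram_solution_def by blast

lemma gram_solution_excess:
  assumes "gram_solution n e z S c x\<^sub>0"
  shows "gram n e z S x x / 2 - vinner n c x
    = gram n e z S x\<^sub>0 x\<^sub>0 / 2 - vinner n c x\<^sub>0
      + gram n e z S (\<lambda>i. x i - x\<^sub>0 i) (\<lambda>i. x i - x\<^sub>0 i) / 2"
  using assms unfolding gram_solution_def
  by (simp add: gram_bilinear gram_commute[of n e z S x x\<^sub>0] field_simps)

lemma gram_solution_min:
  assumes "gram_solution n e z S c x\<^sub>0" "0 \<le> e"
  shows "gram n e z S x\<^sub>0 x\<^sub>0 / 2 - vinner n c x\<^sub>0 \<le> gram n e z S x x / 2 - vinner n c x"
  using gram_solution_excess[OF assms(1), of x] gram_self_nonneg[OF assms(2)] by simp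

lemma gram_solution_unique:
  assumes "0 < e" "gram_solution n e z S c x" "gram_solution n e z S c x'"
  shows "x = x'"
proof -
  have "gram n e z S (\<lambda>i. x i - x' i) (\<lambda>i. x i - x' i) = 0"
    using assms(2,3) unfolding gram_solution_def by (simp add: gram_diff_left)
  then have "\<forall>i<n. x i - x' i = 0" by (intro gram_self_eq_0[OF assms(1), of n z S]) simp
  then show ?thesis using assms(2,3) unfolding gram_solution_def by (intro in_Rn_eqI) auto
qed

lemma gram_inv_eq:
  "finite S \<Longrightarrow> 0 < e \<Longrightarrow> gram_solution n e z S c x \<Longrightarrow> gram_inv n e z S c = x"
  by (rule gram_solution_unique[OF _ gram_inv_solution])

lemma gram_inv_symmetric:
  assumes "finite S" "0 < e"
  shows "vinner n a (gram_inv n e z S b) = vinner n b (gram_inv n e z S a)"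
  using gram_inv_gram[OF assms, of n z a "gram_inv n e z S b"]
    gram_inv_gram[OF assms, of n z b "gram_inv n e z S a"]
  by (simp add: gram_commute)

definition dual_sqnorm :: "nat \<Rightarrow> real \<Rightarrow> (nat \<Rightarrow> nat \<Rightarrow> real) \<Rightarrow> nat set
    \<Rightarrow> (nat \<Rightarrow> real) \<Rightarrow> real" where
  "dual_sqnorm n e z S v = vinner n v (gram_inv n e z S v)"

lemma dual_sqnorm_eq_gram:
  "finite S \<Longrightarrow> 0 < e \<Longrightarrow>
     dual_sqnorm n e z S v = gram n e z S (gram_inv n e z S v) (gram_inv n e z S v)"
  unfolding dual_sqnorm_def by (simp add: gram_inv_gram)

lemma dual_sqnorm_nonneg: "finite S \<Longrightarrow> 0 < e \<Longrightarrow> 0 \<le> dual_sqnorm n e z S v"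
  by (simp add: dual_sqnorm_eq_gram gram_self_nonneg)

lemma dual_sqnorm_ge:
  assumes "finite S" "0 < e"
  shows "2 * vinner n v x - gram n e z S x x \<le> dual_sqnorm n e z S v"
  using gram_solution_min[OF gram_inv_solution[OF assms], of n z v x] assms
  by (simp add: dual_sqnorm_def dual_sqnorm_eq_gram[symmetric])

lemma dual_sqnorm_attained:
  assumes "finite S" "0 < e"
  shows "dual_sqnorm n e z S v
    = 2 * vinner n v (gram_inv n e z S v) - gram n e z S (gram_inv n e z S v) (gram_inv n e z S v)"
  using dual_sqnorm_eq_gram[OF assms] by (simp add: dual_sqnorm_def)

lemma dual_sqnorm_antimono:
  assumes "finite S'" "S \<subseteq> S'" "0 < e" "e \<le> e'"
  shows "dual_sqnorm n e' z S' v \<le> dual_sqnorm n e z S v"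
proof -
  let ?x = "gram_inv n e' z S' v"
  have "dual_sqnorm n e' z S' v = 2 * vinner n v ?x - gram n e' z S' ?x ?x"
    using assms by (intro dual_sqnorm_attained) auto
  also have "\<dots> \<le> 2 * vinner n v ?x - gram n e z S ?x ?x"
    using gram_self_mono[OF assms(4,1,2)] by simp
  also have "\<dots> \<le> dual_sqnorm n e z S v"
    using assms finite_subset by (intro dual_sqnorm_ge) auto
  finally show ?thesis .
qed

lemma dual_sqnorm_le:
  assumes "finite S" "0 < e"
  shows "dual_sqnorm n e z S v \<le> vinner n v v / e"
proof -
  let ?x = "gram_inv n e z S v"
  have "0 \<le> vinner n (\<lambda>i. e * ?x i - v i) (\<lambda>i. e * ?x i - v i)" by (rule vinner_self_nonneg)
  then have "2 * vinner n v ?x - e * vinner n ?x ?x \<le> vinner n v v / e"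
    using assms(2)
    by (simp add: vinner_bilinear vinner_commute[of n ?x v] field_simps power2_eq_square)
  then show ?thesis
    using dual_sqnorm_attained[OF assms, of n z v] gram_self_ge[of e n ?x z S] by simp
qed

lemma dual_inner_abs_le:
  assumes "finite S" "0 < e"
  shows "2 * \<bar>vinner n a (gram_inv n e z S b)\<bar> \<le> dual_sqnorm n e z S a + dual_sqnorm n e z S b"
  using gram_abs_le[of e n z S "gram_inv n e z S a" "gram_inv n e z S b"] assms
  by (simp add: gram_inv_gram dual_sqnorm_eq_gram)

lemma inner_gram_inv_sq_le:
  assumes "finite S" "0 < e"
  shows "(vinner n v (gram_inv n e z S c))\<^sup>2
    \<le> dual_sqnorm n e z S v * gram n e z S (gram_inv n e z S c) (gram_inv n e z S c)"
  using gram_cauchy_schwarz[of e n z S "gram_inv n e z S v" "gram_inv n e z S c"] assms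
  by (simp add: gram_inv_gram dual_sqnorm_eq_gram)

section \<open>The elliptical potential lemma\<close>

lemma gram_Suc:
  "x k = 0 \<Longrightarrow> x' k = 0 \<Longrightarrow> gram (Suc k) e z S x x' = gram k e z S x x'"
  unfolding gram_def by (simp add: vinner_Suc)

lemma gram_vanishing_left: "(\<And>i. i < n \<Longrightarrow> x i = 0) \<Longrightarrow> gram n e z S x x' = 0"
  unfolding gram_def vinner_def by simp

lemma gram_solutionI:
  assumes "in_Rn n x" "\<And>x'. in_Rn n x' \<Longrightarrow> gram n e z S x x' = vinner n c x'"
  shows "gram_solution n e z S c x"
  unfolding gram_solution_def
proof (intro conjI allI)
  fix x' :: "nat \<Rightarrow> real"
  define x'' where "x'' i = (if i < n then x' i else 0)" for i
  have "gram n e z S x x' = gram n e z S x x''" "vinner n c x' = vinner n c x''"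
    unfolding gram_def vinner_def x''_def by simp_all
  moreover have "in_Rn n x''" unfolding x''_def in_Rn_def by simp
  ultimately show "gram n e z S x x' = vinner n c x'" using assms(2) by simp
qed (rule assms(1))

definition unit_vec :: "nat \<Rightarrow> nat \<Rightarrow> real" where
  "unit_vec k i = (if i = k then 1 else 0)"

lemma vinner_unit_vec: "vinner (Suc k) (unit_vec k) x = x k"
  unfolding vinner_def unit_vec_def by (simp add: if_distrib cong: if_cong)

lemma vinner_unit_vec_right: "vinner (Suc k) x (unit_vec k) = x k"
  using vinner_unit_vec vinner_commute by metis

text \<open>The pivot of \<open>A = e I + \<Sum>\<^sub>s z\<^sub>s z\<^sub>s\<^sup>T\<close> on \<open>\<real>\<^bsup>k+1\<^esup>\<close> is the vector with last coordinate 1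
  that is \<open>A\<close>-orthogonal to \<open>\<real>\<^sup>k\<close>. Its squared \<open>A\<close>-norm is the Schur complement
  \<open>det A\<^sub>k\<^sub>+\<^sub>1 / det A\<^sub>k\<close>; the pivots play the role of log-determinants in the elliptical
  potential lemma, without any determinants.\<close>

definition pivot :: "nat \<Rightarrow> real \<Rightarrow> (nat \<Rightarrow> nat \<Rightarrow> real) \<Rightarrow> nat set \<Rightarrow> nat \<Rightarrow> real" where
  "pivot k e z S i = gram_inv (Suc k) e z S (unit_vec k) i / gram_inv (Suc k) e z S (unit_vec k) k"

lemma gram_inv_unit_vec_pos:
  assumes "finite S" "0 < e"
  shows "0 < gram_inv (Suc k) e z S (unit_vec k) k"
proof (rule ccontr)
  let ?s = "gram_inv (Suc k) e z S (unit_vec k)"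
  assume "\<not> 0 < ?s k"
  moreover have "gram (Suc k) e z S ?s ?s = ?s k"
    using assms by (simp add: gram_inv_gram vinner_unit_vec)
  ultimately have "\<forall>i<Suc k. ?s i = 0" by (intro gram_self_eq_0[OF assms(2), of _ z S]) auto
  then have "gram (Suc k) e z S ?s (unit_vec k) = 0" by (intro gram_vanishing_left) auto
  moreover have "gram (Suc k) e z S ?s (unit_vec k) = 1"
    using assms by (simp add: gram_inv_gram vinner_unit_vec unit_vec_def)
  ultimately show False by simp
qed

lemma
  assumes "finite S" "0 < e"
  shows pivot_in_Rn: "in_Rn (Suc k) (pivot k e z S)"
    and pivot_last: "pivot k e z S k = 1"
    and gram_pivot_orthogonal: "in_Rn k x \<Longrightarrow> gram (Suc k) e z S (pivot k e z S) x = 0"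
proof -
  let ?s = "gram_inv (Suc k) e z S (unit_vec k)"
  have s: "gram_solution (Suc k) e z S (unit_vec k) ?s" using gram_inv_solution[OF assms] .
  have pos: "0 < ?s k" using gram_inv_unit_vec_pos[OF assms] .
  have p: "pivot k e z S = (\<lambda>i. (1 / ?s k) * ?s i)" unfolding pivot_def by auto
  show "in_Rn (Suc k) (pivot k e z S)" using s unfolding gram_solution_def in_Rn_def p by simp
  show "pivot k e z S k = 1" unfolding pivot_def using pos by simp
  show "gram (Suc k) e z S (pivot k e z S) x = 0" if "in_Rn k x"
    using s that unfolding p gram_scale_left gram_solution_def in_Rn_def
    by (simp add: vinner_unit_vec)
qed

lemma gram_pivot_min:
  assumes "finite S" "0 < e" "in_Rn (Suc k) x" "x k = 1"
  shows "gram (Suc k) e z S (pivot k e z S) (pivot k e z S) \<le> gram (Suc k) e z S x x"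
proof -
  let ?p = "pivot k e z S"
  define d where "d i = x i - ?p i" for i
  have "in_Rn k d"
    using pivot_in_Rn[OF assms(1,2)] pivot_last[OF assms(1,2)] assms(3,4)
    unfolding d_def in_Rn_def by (metis diff_self le_eq_less_or_eq less_eq_Suc_le)
  then have "gram (Suc k) e z S ?p d = 0" by (rule gram_pivot_orthogonal[OF assms(1,2)])
  moreover have "x = (\<lambda>i. ?p i + 1 * d i)" unfolding d_def by simp
  ultimately have "gram (Suc k) e z S x x = gram (Suc k) e z S ?p ?p + gram (Suc k) e z S d d"
    using gram_square_add[of "Suc k" e z S ?p 1 d] by simp
  then show ?thesis using gram_self_nonneg[of e] assms(2) by simp
qed

lemma e_le_gram_pivot:
  assumes "finite S" "0 < e"
  shows "e \<le> gram (Suc k) e z S (pivot k e z S) (pivot k e z S)"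
proof -
  let ?p = "pivot k e z S"
  have "1 \<le> vinner (Suc k) ?p ?p"
    using pivot_last[OF assms] vinner_Suc[of k ?p ?p] vinner_self_nonneg[of k ?p] by simp
  then have "e \<le> e * vinner (Suc k) ?p ?p" using assms(2) by simp
  also have "\<dots> \<le> gram (Suc k) e z S ?p ?p" by (rule gram_self_ge)
  finally show ?thesis .
qed

lemma gram_pivot_le:
  assumes "finite S" "0 < e"
  shows "gram (Suc k) e z S (pivot k e z S) (pivot k e z S) \<le> e + (\<Sum>s\<in>S. (z s k)\<^sup>2)"
proof -
  have "gram (Suc k) e z S (pivot k e z S) (pivot k e z S)
      \<le> gram (Suc k) e z S (unit_vec k) (unit_vec k)"
    using assms by (intro gram_pivot_min) (auto simp: in_Rn_def unit_vec_def)
  also have "\<dots> = e + (\<Sum>s\<in>S. (z s k)\<^sup>2)"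
    unfolding gram_def
    by (simp add: vinner_unit_vec vinner_unit_vec_right power2_eq_square unit_vec_def)
  finally show ?thesis .
qed

lemma gram_pivot_insert:
  assumes "finite S" "0 < e" "t \<notin> S"
  shows "gram (Suc k) e z S (pivot k e z S) (pivot k e z S)
      + (vinner (Suc k) (z t) (pivot k e z (insert t S)))\<^sup>2
    \<le> gram (Suc k) e z (insert t S) (pivot k e z (insert t S)) (pivot k e z (insert t S))"
proof -
  let ?p = "pivot k e z (insert t S)"
  have "gram (Suc k) e z S (pivot k e z S) (pivot k e z S) \<le> gram (Suc k) e z S ?p ?p"
    using assms by (intro gram_pivot_min pivot_in_Rn pivot_last) auto
  then show ?thesis using assms by (simp add: gram_insert power2_eq_square)
qed

lemma dual_sqnorm_Suc:
  assumes "finite S" "0 < e"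
  shows "dual_sqnorm (Suc k) e z S v = dual_sqnorm k e z S v
    + (vinner (Suc k) v (pivot k e z S))\<^sup>2
      / gram (Suc k) e z S (pivot k e z S) (pivot k e z S)"
proof -
  let ?p = "pivot k e z S" and ?V = "gram_inv (Suc k) e z S v"
  let ?g = "gram (Suc k) e z S ?p ?p"
  have V: "gram_solution (Suc k) e z S v ?V" using gram_inv_solution[OF assms] .
  have g: "0 < ?g" using e_le_gram_pivot[OF assms, of k z] assms(2) by linarith
  define a where "a = ?V k"
  define v' where "v' i = ?V i - a * ?p i" for i
  have v': "in_Rn k v'"
    using V pivot_in_Rn[OF assms] pivot_last[OF assms] unfolding v'_def in_Rn_def gram_solution_def a_def
    by (metis diff_self le_eq_less_or_eq less_eq_Suc_le mult.right_neutral mult_zero_right)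
  have v'_k: "v' k = 0" using v' by (simp add: in_Rn_def)
  have v'_orth: "gram (Suc k) e z S v' ?p = 0"
    using gram_pivot_orthogonal[OF assms v'] by (simp add: gram_commute)
  have "gram_solution k e z S v v'"
  proof (rule gram_solutionI[OF v'])
    fix x assume x: "in_Rn k x"
    then have "gram k e z S v' x = gram (Suc k) e z S v' x" using v'_k by (simp add: gram_Suc in_Rn_def)
    also have "\<dots> = gram (Suc k) e z S ?V x - a * gram (Suc k) e z S ?p x"
      unfolding v'_def by (simp add: gram_diff_left gram_scale_left)
    also have "\<dots> = vinner k v x"
      using V gram_pivot_orthogonal[OF assms x] x unfolding gram_solution_def in_Rn_def
      by (simp add: vinner_Suc)
    finally show "gram k e z S v' x = vinner k v x" .
  qed
  then have dual_k: "dual_sqnorm k e z S v = vinner (Suc k) v v'"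
    using assms v'_k by (simp add: dual_sqnorm_def gram_inv_eq vinner_Suc)
  have "vinner (Suc k) v ?p = gram (Suc k) e z S ?V ?p"
    using V unfolding gram_solution_def by simp
  also have "\<dots> = a * ?g"
    using v'_orth unfolding v'_def by (simp add: gram_diff_left gram_scale_left)
  finally have "a = vinner (Suc k) v ?p / ?g" using g by (simp add: field_simps)
  moreover have "dual_sqnorm (Suc k) e z S v = vinner (Suc k) v v' + a * vinner (Suc k) v ?p"
    unfolding dual_sqnorm_def v'_def by (simp add: vinner_bilinear)
  ultimately show ?thesis using dual_k by (simp add: power2_eq_square)
qed

lemma sum_increment_ratio_le_ln:
  fixes s a :: "nat \<Rightarrow> real"
  assumes pos: "\<And>t. t \<le> T \<Longrightarrow> 0 < s t"
    and incr: "\<And>t. t \<in> {1..T} \<Longrightarrow> s (t - 1) + a t \<le> s t"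
  shows "(\<Sum>t=1..T. a t / s t) \<le> ln (s T / s 0)"
proof -
  have "a t / s t \<le> ln (s t) - ln (s (t - 1))" if t: "t \<in> {1..T}" for t
  proof -
    have st: "0 < s t" "0 < s (t - 1)" using pos t by auto
    have "a t / s t \<le> 1 - s (t - 1) / s t" using incr[OF t] st by (simp add: field_simps)
    also have "\<dots> \<le> - ln (s (t - 1) / s t)" using ln_le_minus_one[of "s (t - 1) / s t"] st by simp
    also have "\<dots> = ln (s t) - ln (s (t - 1))" using st by (simp add: ln_div)
    finally show ?thesis .
  qed
  then have "(\<Sum>t=1..T. a t / s t) \<le> (\<Sum>t=1..T. ln (s t) - ln (s (t - 1)))" by (rule sum_mono)
  also have "\<dots> = ln (s T) - ln (s 0)" using sum_telescope''[of 0 T "\<lambda>t. ln (s t)"] by simp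
  also have "\<dots> = ln (s T / s 0)" using pos[of T] pos[of 0] by (simp add: ln_div)
  finally show ?thesis .
qed

lemma sum_dual_sqnorm_le_coordinates:
  assumes "0 < e"
  shows "(\<Sum>t=1..T. dual_sqnorm k e z {1..t} (z t)) \<le> (\<Sum>i<k. ln (1 + (\<Sum>t=1..T. (z t i)\<^sup>2) / e))"
proof (induction k)
  case 0
  then show ?case by (simp add: dual_sqnorm_def vinner_def)
next
  case (Suc k)
  define g where "g t = gram (Suc k) e z {1..t} (pivot k e z {1..t}) (pivot k e z {1..t})" for t
  have g_pos: "0 < g t" for t
    using e_le_gram_pivot[of "{1..t}" e k z] assms unfolding g_def by simp
  have "(\<Sum>t=1..T. (vinner (Suc k) (z t) (pivot k e z {1..t}))\<^sup>2 / g t) \<le> ln (g T / g 0)"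
  proof (rule sum_increment_ratio_le_ln[OF g_pos])
    fix t assume "t \<in> {1..T}"
    then have "{1..t} = insert t {1..t - 1}" "t \<notin> {1..t - 1}" by auto
    then show "g (t - 1) + (vinner (Suc k) (z t) (pivot k e z {1..t}))\<^sup>2 \<le> g t"
      using gram_pivot_insert[of "{1..t - 1}" e t k z] assms unfolding g_def by simp
  qed
  also have "\<dots> \<le> ln ((e + (\<Sum>t=1..T. (z t k)\<^sup>2)) / e)"
  proof -
    have "g T \<le> e + (\<Sum>t=1..T. (z t k)\<^sup>2)" "e \<le> g 0"
      using gram_pivot_le[of "{1..T}" e k z] e_le_gram_pivot[of "{1..0}" e k z] assms
      unfolding g_def by simp_all
    then have "g T / g 0 \<le> (e + (\<Sum>t=1..T. (z t k)\<^sup>2)) / e"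
      using g_pos[of T] assms by (intro frac_le) auto
    moreover have "0 < (e + (\<Sum>t=1..T. (z t k)\<^sup>2)) / e"
      using assms by (simp add: add_pos_nonneg sum_nonneg)
    ultimately show ?thesis using g_pos[of T] g_pos[of 0] by (subst ln_le_cancel_iff) auto
  qed
  also have "\<dots> = ln (1 + (\<Sum>t=1..T. (z t k)\<^sup>2) / e)" using assms by (simp add: field_simps)
  finally show ?case
    using Suc.IH dual_sqnorm_Suc[OF _ assms] unfolding g_def by (simp add: sum.distrib)
qed

lemma sum_ln_le_ln_mean:
  fixes a :: "nat \<Rightarrow> real"
  assumes "1 \<le> n" "\<And>i. i < n \<Longrightarrow> 0 < a i"
  shows "(\<Sum>i<n. ln (a i)) \<le> real n * ln ((\<Sum>i<n. a i) / real n)"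
proof -
  define m where "m = (\<Sum>i<n. a i) / real n"
  have "0 < (\<Sum>i<n. a i)" using assms by (intro sum_pos) (auto simp: lessThan_empty_iff)
  then have m: "0 < m" "(\<Sum>i<n. a i) / m = real n" unfolding m_def using assms(1) by auto
  have "ln (a i) \<le> ln m + (a i / m - 1)" if "i < n" for i
    using ln_le_minus_one[of "a i / m"] assms(2)[OF that] m by (simp add: ln_div)
  then have "(\<Sum>i<n. ln (a i)) \<le> (\<Sum>i<n. ln m + (a i / m - 1))" by (intro sum_mono) auto
  also have "\<dots> = real n * ln m + (\<Sum>i<n. a i) / m - real n"
    by (simp add: sum.distrib sum_subtractf sum_divide_distrib[symmetric])
  finally show ?thesis using m unfolding m_def by simp
qed

lemma elliptical_potential:
  assumes "0 < e" "1 \<le> n"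
  shows "(\<Sum>t=1..T. dual_sqnorm n e z {1..t} (z t))
    \<le> real n * ln (1 + (\<Sum>t=1..T. vinner n (z t) (z t)) / (e * real n))"
proof -
  have "(\<Sum>t=1..T. dual_sqnorm n e z {1..t} (z t)) \<le> (\<Sum>i<n. ln (1 + (\<Sum>t=1..T. (z t i)\<^sup>2) / e))"
    by (rule sum_dual_sqnorm_le_coordinates[OF assms(1)])
  also have "\<dots> \<le> real n * ln ((\<Sum>i<n. 1 + (\<Sum>t=1..T. (z t i)\<^sup>2) / e) / real n)"
    using assms by (intro sum_ln_le_ln_mean) (auto intro!: add_pos_nonneg divide_nonneg_nonneg sum_nonneg)
  also have "(\<Sum>i<n. 1 + (\<Sum>t=1..T. (z t i)\<^sup>2) / e) / real n
      = 1 + (\<Sum>t=1..T. vinner n (z t) (z t)) / (e * real n)"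
  proof -
    have "(\<Sum>i<n. \<Sum>t=1..T. (z t i)\<^sup>2) = (\<Sum>t=1..T. vinner n (z t) (z t))"
      unfolding vinner_def by (simp add: sum.swap[of _ "{..<n}"] power2_eq_square)
    then show ?thesis using assms by (simp add: sum.distrib sum_divide_distrib[symmetric] field_simps)
  qed
  finally show ?thesis .
qed

section \<open>Scalar inequalities and clipping\<close>

lemma ln_one_plus_le_mult:
  fixes x :: real
  assumes "1 \<le> n" "0 \<le> x"
  shows "ln (1 + x) \<le> real n * ln (1 + x / real n)"
proof -
  have "-1 \<le> x / real n" using assms by (smt (verit) divide_nonneg_nonneg of_nat_0_le_iff)
  then have "1 + real n * (x / real n) \<le> (1 + x / real n) ^ n" by (rule Bernoulli_inequality)
  then have "1 + x \<le> (1 + x / real n) ^ n" using assms by simp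
  then have "ln (1 + x) \<le> ln ((1 + x / real n) ^ n)" using assms by simp
  also have "\<dots> = real n * ln (1 + x / real n)" using assms by (simp add: ln_realpow)
  finally show ?thesis .
qed

lemma ln_one_plus_ge_clipped_sqrt:
  fixes x :: real
  assumes "0 \<le> x"
  shows "2 * min (max 0 (sqrt x - 1)) (1/2) \<le> ln (1 + x)"
proof -
  define s where "s = sqrt x"
  have s: "0 \<le> s" "x = s\<^sup>2" using assms unfolding s_def by auto
  consider "s \<le> 1" | "3/2 \<le> s" | "1 < s" "s < 3/2" by linarith
  then show ?thesis
  proof cases
    case 1
    then show ?thesis using assms unfolding s_def[symmetric] by simp
  next
    case 2
    have "9/4 \<le> x" using 2 power_mono[OF 2, of 2] s by (simp add: power2_eq_square)
    have "1 < ln (272/100::real)" by (rule ln_272_gt_1)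
    also have "\<dots> \<le> ln (1 + x)" using \<open>9/4 \<le> x\<close> by simp
    finally show ?thesis by (auto simp: min_def max_def)
  next
    case 3
    \<comment> \<open>On \<open>1 < s < 3/2\<close>: \<open>ln (1 + s\<^sup>2) \<ge> ln (2 s) \<ge> 2/3 + (1 - 1/s) \<ge> 2 (s - 1)\<close>.\<close>
    have "2 * s \<le> 1 + x" using s sum_squares_bound[of s 1] by simp
    then have "ln (2 * s) \<le> ln (1 + x)" using 3 by simp
    moreover have "ln (2 * s) = ln 2 + ln s" using 3 by (simp add: ln_mult)
    moreover have "2/3 \<le> ln (2::real)" by (rule ln2_ge_two_thirds)
    moreover have "1 - 1 / s \<le> ln s"
      using ln_le_minus_one[of "1 / s"] 3 by (simp add: ln_div)
    moreover have "2 * (s - 1) \<le> 5/3 - 1 / s"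
    proof -
      have "(s - 3/2) * (6 * s - 2) \<le> 0" using 3 by (intro mult_nonpos_nonneg) auto
      then show ?thesis using 3 by (simp add: field_simps power2_eq_square algebra_simps)
    qed
    ultimately have "2 * (s - 1) \<le> ln (1 + x)" by linarith
    then show ?thesis using 3 s_def by simp
  qed
qed

definition clip :: "real \<Rightarrow> real \<Rightarrow> real" where
  "clip r p = max (- r) (min r p)"

lemma clip_abs_le: "0 \<le> r \<Longrightarrow> \<bar>clip r p\<bar> \<le> r"
  unfolding clip_def by auto

lemma clip_above_sq_loss_excess:
  fixes r p y :: real
  assumes "0 \<le> r" "r < p"
  shows "(r - y)\<^sup>2 - (p - y)\<^sup>2 \<le> 2 * max 0 (\<bar>p\<bar> - r) * max 0 (\<bar>y\<bar> - r)
      \<and> (r - y)\<^sup>2 - (p - y)\<^sup>2 \<le> (max 0 (\<bar>y\<bar> - r))\<^sup>2"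
proof (cases "y \<le> r")
  case True
  have "(r - y)\<^sup>2 - (p - y)\<^sup>2 = - ((p - r) * (p + r - 2 * y))" by (simp add: power2_eq_square algebra_simps)
  also have "\<dots> \<le> 0" using assms True by simp
  finally show ?thesis by (smt (verit) zero_le_mult_iff zero_le_power2)
next
  case False
  then have "max 0 (\<bar>y\<bar> - r) = y - r" "max 0 (\<bar>p\<bar> - r) = p - r" using assms by auto
  moreover have "(r - y)\<^sup>2 - (p - y)\<^sup>2 = 2 * (p - r) * (y - r) - (p - r)\<^sup>2"
    "(r - y)\<^sup>2 - (p - y)\<^sup>2 = (y - r)\<^sup>2 - (y - p)\<^sup>2"
    by (simp_all add: power2_eq_square algebra_simps)
  ultimately show ?thesis by (smt (verit) zero_le_power2)
qed

lemma clip_sq_loss_excess: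
  assumes "0 \<le> r"
  shows "(clip r p - y)\<^sup>2 - (p - y)\<^sup>2 \<le> 2 * max 0 (\<bar>p\<bar> - r) * max 0 (\<bar>y\<bar> - r)"
    and "(clip r p - y)\<^sup>2 - (p - y)\<^sup>2 \<le> (max 0 (\<bar>y\<bar> - r))\<^sup>2"
proof -
  consider "r < p" | "p < - r" | "\<bar>p\<bar> \<le> r" by linarith
  then have "(clip r p - y)\<^sup>2 - (p - y)\<^sup>2 \<le> 2 * max 0 (\<bar>p\<bar> - r) * max 0 (\<bar>y\<bar> - r)
      \<and> (clip r p - y)\<^sup>2 - (p - y)\<^sup>2 \<le> (max 0 (\<bar>y\<bar> - r))\<^sup>2"
  proof cases
    case 1
    then show ?thesis using clip_above_sq_loss_excess[OF assms 1] assms by (simp add: clip_def)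
  next
    case 2
    then have "(clip r p - y)\<^sup>2 - (p - y)\<^sup>2 = (r - (- y))\<^sup>2 - ((- p) - (- y))\<^sup>2"
      using assms by (simp add: clip_def power2_eq_square algebra_simps)
    then show ?thesis using clip_above_sq_loss_excess[OF assms, of "- p" "- y"] 2 by simp
  next
    case 3
    then show ?thesis by (simp add: clip_def abs_le_iff)
  qed
  then show "(clip r p - y)\<^sup>2 - (p - y)\<^sup>2 \<le> 2 * max 0 (\<bar>p\<bar> - r) * max 0 (\<bar>y\<bar> - r)"
    and "(clip r p - y)\<^sup>2 - (p - y)\<^sup>2 \<le> (max 0 (\<bar>y\<bar> - r))\<^sup>2" by simp_all
qed

lemma clip_sq_loss_le:
  assumes "0 \<le> r"
  shows "(clip r p - y)\<^sup>2 \<le> (p - y)\<^sup>2 + max 0 (y\<^sup>2 - r\<^sup>2)"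
proof -
  have "(max 0 (\<bar>y\<bar> - r))\<^sup>2 \<le> max 0 (y\<^sup>2 - r\<^sup>2)"
  proof (cases "r \<le> \<bar>y\<bar>")
    case True
    then have "(\<bar>y\<bar> - r)\<^sup>2 \<le> y\<^sup>2 - r\<^sup>2"
      using mult_left_mono[OF True assms] by (simp add: power2_eq_square algebra_simps)
    then show ?thesis using True by simp
  qed simp
  then show ?thesis using clip_sq_loss_excess(2)[OF assms, of p y] by simp
qed

lemma clip_sq_loss_le_perturbed:
  assumes "0 \<le> r" "r \<le> Y" "\<bar>y\<bar> \<le> Y"
  shows "(clip r p - y)\<^sup>2 - (q - y)\<^sup>2 \<le> 5 * Y * \<bar>p - q\<bar> + max 0 (y\<^sup>2 - r\<^sup>2)"
proof -
  define a where "a = \<bar>p - q\<bar>"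
  have Y: "0 \<le> Y" "0 \<le> Y * a" using assms unfolding a_def by auto
  have clip_loss: "(clip r p - y)\<^sup>2 \<le> 4 * Y\<^sup>2"
  proof -
    have "\<bar>clip r p - y\<bar> \<le> 2 * Y" using clip_abs_le[OF assms(1), of p] assms by linarith
    from power_mono[OF this abs_ge_zero, of 2] show ?thesis by (simp add: power2_eq_square)
  qed
  show ?thesis
  proof (cases "2 * Y \<le> \<bar>q - y\<bar>")
    case True
    from power_mono[OF this, of 2] have "4 * Y\<^sup>2 \<le> (q - y)\<^sup>2" using Y by (simp add: power2_eq_square)
    then show ?thesis using clip_loss Y unfolding a_def by linarith
  next
    case False
    have "(p - y)\<^sup>2 - (q - y)\<^sup>2 = (p - q)\<^sup>2 + 2 * ((p - q) * (q - y))"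
      by (simp add: power2_eq_square algebra_simps)
    also have "\<dots> \<le> a\<^sup>2 + 2 * (a * (2 * Y))"
    proof -
      have "(p - q) * (q - y) \<le> a * \<bar>q - y\<bar>" unfolding a_def abs_mult[symmetric] by (rule abs_ge_self)
      also have "\<dots> \<le> a * (2 * Y)" using False unfolding a_def by (intro mult_left_mono) auto
      finally have "(p - q) * (q - y) \<le> a * (2 * Y)" .
      then show ?thesis using power2_abs[of "p - q"] unfolding a_def by linarith
    qed
    finally have near: "(p - y)\<^sup>2 - (q - y)\<^sup>2 \<le> a\<^sup>2 + 4 * Y * a" by (simp add: mult_ac)
    show ?thesis
    proof (cases "a \<le> Y")
      case True
      have "a\<^sup>2 \<le> Y * a" using mult_right_mono[OF True, of a] by (simp add: a_def power2_eq_square)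
      then show ?thesis using near clip_sq_loss_le[OF assms(1), of p y] unfolding a_def by linarith
    next
      case False
      then have "Y * Y \<le> Y * a" using Y by (intro mult_left_mono) auto
      then show ?thesis using clip_loss Y zero_le_square[of "q - y"]
        unfolding a_def[symmetric] power2_eq_square by linarith
    qed
  qed
qed

section \<open>Top-\<open>k\<close> sums\<close>

definition top_sum :: "(nat \<Rightarrow> real) \<Rightarrow> nat \<Rightarrow> nat \<Rightarrow> real" where
  "top_sum f k t = Max (sum f ` {A. A \<subseteq> {1..t - 1} \<and> card A \<le> k})"

lemma finite_bounded_subsets: "finite {A. A \<subseteq> {1..(t::nat) - 1} \<and> card A \<le> k}"
  by (rule finite_subset[of _ "Pow {1..t - 1}"]) auto

lemma top_sum_ge: "A \<subseteq> {1..t - 1} \<Longrightarrow> card A \<le> k \<Longrightarrow> sum f A \<le> top_sum f k t"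
  unfolding top_sum_def using finite_bounded_subsets by (intro Max_ge) auto

lemma top_sum_attained: "\<exists>A. A \<subseteq> {1..t - 1} \<and> card A \<le> k \<and> top_sum f k t = sum f A"
proof -
  have "top_sum f k t \<in> sum f ` {A. A \<subseteq> {1..t - 1} \<and> card A \<le> k}"
    unfolding top_sum_def using finite_bounded_subsets by (intro Max_in) auto
  then show ?thesis by auto
qed

lemma top_sum_1: "top_sum f k 1 = 0"
  unfolding top_sum_def by simp

lemma top_sum_le:
  assumes "0 \<le> B" "\<And>s. s \<in> {1..t - 1} \<Longrightarrow> f s \<le> B"
  shows "top_sum f k t \<le> real k * B"
proof -
  obtain A where A: "A \<subseteq> {1..t - 1}" "card A \<le> k" "top_sum f k t = sum f A"
    using top_sum_attained by blast
  then have "sum f A \<le> real (card A) * B"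
    using sum_mono[of A f "\<lambda>_. B"] assms(2) by fastforce
  also have "\<dots> \<le> real k * B" using A(2) assms(1) by (intro mult_right_mono) auto
  finally show ?thesis using A(3) by simp
qed

text \<open>If \<open>f t > g\<close>, then \<open>f t\<close> exceeds every value \<open>f s\<close> of a maximising set outside the fewer
  than \<open>k\<close> exceptional indices \<open>M\<close>, so adding \<open>t\<close> to that set, or exchanging one of its
  non-exceptional elements for \<open>t\<close>, raises the top-\<open>k\<close> sum by at least \<open>f t - g\<close>.\<close>

lemma top_sum_Suc:
  assumes t: "1 \<le> t" and M: "finite M" "card M < k"
    and f_le: "\<And>s. s \<in> {1..t - 1} - M \<Longrightarrow> f s \<le> g" and "0 \<le> g"
  shows "top_sum f k t + max 0 (f t - g) \<le> top_sum f k (Suc t)"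
proof -
  obtain A where A: "A \<subseteq> {1..t - 1}" "card A \<le> k" "top_sum f k t = sum f A"
    using top_sum_attained by blast
  have A_fin: "finite A" and t_notin: "t \<notin> A" using A(1) t finite_subset by auto
  have A_sub: "A \<subseteq> {1..Suc t - 1}" using A(1) by (rule order_trans) auto
  show ?thesis
  proof (cases "f t \<le> g")
    case True
    then show ?thesis using top_sum_ge[OF A_sub A(2), of f] A(3) by simp
  next
    case excess: False
    show ?thesis
    proof (cases "card A < k")
      case True
      have "sum f (insert t A) \<le> top_sum f k (Suc t)"
        using A_sub True A_fin t_notin t by (intro top_sum_ge) auto
      then show ?thesis using A_fin t_notin A(3) excess \<open>0 \<le> g\<close> by simp
    next
      case False
      have "\<not> A \<subseteq> M"
      proof
        assume "A \<subseteq> M"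
        then have "card A \<le> card M" using M by (intro card_mono) auto
        then show False using M False by simp
      qed
      then obtain s where s: "s \<in> A" "s \<notin> M" by blast
      have "card (insert t (A - {s})) = card A"
        using A_fin t_notin s(1) by (simp add: card_Diff_singleton) (metis Suc_pred card_gt_0_iff empty_iff)
      then have "sum f (insert t (A - {s})) \<le> top_sum f k (Suc t)"
        using A_sub A(2) t s(1) by (intro top_sum_ge) auto
      moreover have "sum f (insert t (A - {s})) = top_sum f k t - f s + f t"
        using A_fin t_notin s(1) A(3) by (simp add: sum_diff1)
      moreover have "f s \<le> g" using f_le s A(1) by auto
      ultimately show ?thesis using excess by simp
    qed
  qed
qed

lemma sum_excess_le_top_k:
  fixes f g :: "nat \<Rightarrow> real" and M :: "nat \<Rightarrow> nat set"
  assumes "0 \<le> B"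
    and "\<And>t. t \<in> {1..T} \<Longrightarrow> finite (M t) \<and> card (M t) < k"
    and "\<And>t s. t \<in> {1..T} \<Longrightarrow> s \<in> {1..t - 1} - M t \<Longrightarrow> f s \<le> g t"
    and "\<And>t. t \<in> {1..T} \<Longrightarrow> 0 \<le> g t"
    and "\<And>s. s \<in> {1..T} \<Longrightarrow> f s \<le> B"
  shows "(\<Sum>t=1..T. max 0 (f t - g t)) \<le> real k * B"
proof -
  have "(\<Sum>t=1..T. max 0 (f t - g t)) \<le> (\<Sum>t=1..T. top_sum f k (Suc t) - top_sum f k t)"
  proof (rule sum_mono)
    fix t assume t: "t \<in> {1..T}"
    have "top_sum f k t + max 0 (f t - g t) \<le> top_sum f k (Suc t)"
      using t assms(2)[OF t] assms(3)[OF t] assms(4)[OF t] by (intro top_sum_Suc) auto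
    then show "max 0 (f t - g t) \<le> top_sum f k (Suc t) - top_sum f k t" by linarith
  qed
  also have "\<dots> = top_sum f k (Suc T) - top_sum f k 1" by (rule sum_Suc_diff) simp
  also have "\<dots> \<le> real k * B"
    using top_sum_le[OF assms(1), of "Suc T" f k] assms(5) top_sum_1[of f k] by simp
  finally show ?thesis .
qed

section \<open>Missing labels and clipping thresholds\<close>

lemma obs_subset: "obs d t \<subseteq> {1..t - 1}"
  unfolding obs_def by auto

lemma finite_obs: "finite (obs d t)"
  using obs_subset finite_subset by blast

lemma miss_iff: "\<tau> \<in> miss d t \<longleftrightarrow> 1 \<le> \<tau> \<and> \<tau> < t \<and> t \<le> \<tau> + d \<tau>"
  unfolding miss_def obs_def by auto

lemma finite_miss: "finite (miss d t)"
  unfolding miss_def by simp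

lemma card_miss_le_sigma_max: "t \<in> {1..T} \<Longrightarrow> card (miss d t) \<le> sigma_max T d"
  unfolding sigma_max_def by (intro Max_ge) auto

lemma d_le_d_max: "\<tau> \<in> {1..T} \<Longrightarrow> d \<tau> \<le> d_max T d"
  unfolding d_max_def by (intro Max_ge) auto

lemma card_miss_le_d_max:
  assumes "t \<le> T"
  shows "card (miss d t) \<le> d_max T d"
proof -
  have "miss d t \<subseteq> {t - d_max T d..<t}"
  proof
    fix \<tau> assume "\<tau> \<in> miss d t"
    moreover from this have "d \<tau> \<le> d_max T d" using assms by (intro d_le_d_max) (auto simp: miss_iff)
    ultimately show "\<tau> \<in> {t - d_max T d..<t}" by (auto simp: miss_iff)
  qed
  then have "card (miss d t) \<le> card {t - d_max T d..<t}" by (intro card_mono) auto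
  then show ?thesis by simp
qed

lemma sum_miss_le_d_max:
  assumes "\<And>\<tau>. \<tau> \<in> {1..T} \<Longrightarrow> 0 \<le> f \<tau>"
  shows "(\<Sum>t=1..T. \<Sum>\<tau>\<in>miss d t. f \<tau>) \<le> real (d_max T d) * (\<Sum>\<tau>=1..T. f \<tau>)"
proof -
  have "(\<Sum>t=1..T. \<Sum>\<tau>\<in>miss d t. f \<tau>) = (\<Sum>t=1..T. \<Sum>\<tau>=1..T. if \<tau> \<in> miss d t then f \<tau> else 0)"
  proof (rule sum.cong[OF refl])
    fix t assume "t \<in> {1..T}"
    then have "{1..T} \<inter> miss d t = miss d t" by (auto simp: miss_iff)
    then show "(\<Sum>\<tau>\<in>miss d t. f \<tau>) = (\<Sum>\<tau>=1..T. if \<tau> \<in> miss d t then f \<tau> else 0)"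
      by (simp add: sum.inter_restrict[symmetric])
  qed
  also have "\<dots> = (\<Sum>\<tau>=1..T. real (card {t\<in>{1..T}. \<tau> \<in> miss d t}) * f \<tau>)"
    by (subst sum.swap) (simp add: sum.inter_filter[symmetric])
  also have "\<dots> \<le> (\<Sum>\<tau>=1..T. real (d_max T d) * f \<tau>)"
  proof (intro sum_mono mult_right_mono)
    fix \<tau> assume \<tau>: "\<tau> \<in> {1..T}"
    have "{t\<in>{1..T}. \<tau> \<in> miss d t} \<subseteq> {\<tau><..\<tau> + d \<tau>}" by (auto simp: miss_iff)
    then have "card {t\<in>{1..T}. \<tau> \<in> miss d t} \<le> card {\<tau><..\<tau> + d \<tau>}" by (intro card_mono) auto
    then have "card {t\<in>{1..T}. \<tau> \<in> miss d t} \<le> d \<tau>" by simp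
    also have "\<dots> \<le> d_max T d" using d_le_d_max[OF \<tau>] .
    finally show "real (card {t\<in>{1..T}. \<tau> \<in> miss d t}) \<le> real (d_max T d)" by simp
  qed (use assms in auto)
  finally show ?thesis by (simp add: sum_distrib_left)
qed

lemma obs_eq_if_sigma_max_0:
  assumes "sigma_max T d = 0" "\<forall>t\<in>{1..T}. t + d t \<le> T" "t \<in> {1..Suc T}"
  shows "obs d t = {1..t - 1}"
proof (cases "t \<le> T")
  case True
  then have "card (miss d t) = 0" using card_miss_le_sigma_max[of t T d] assms by simp
  then have "miss d t = {}" using finite_miss by simp
  then show ?thesis using obs_subset unfolding miss_def by blast
next
  case False
  then have "t = Suc T" using assms(3) by simp
  have "{1..T} \<subseteq> obs d t"
  proof
    fix \<tau> assume "\<tau> \<in> {1..T}"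
    then have "\<tau> + d \<tau> \<le> T" using assms(2) by blast
    then show "\<tau> \<in> obs d t" using \<open>\<tau> \<in> {1..T}\<close> \<open>t = Suc T\<close> unfolding obs_def by simp
  qed
  then show ?thesis using obs_subset[of d t] \<open>t = Suc T\<close> by auto
qed

lemma abs_le_rho: "s \<in> obs d t \<Longrightarrow> \<bar>y s\<bar> \<le> rho y d t"
  unfolding rho_def using finite_obs by auto

lemma rho_nonneg: "0 \<le> rho y d t"
proof (cases "obs d t = {}")
  case False
  then obtain s where "s \<in> obs d t" by blast
  then show ?thesis using abs_le_rho[of s d t y] by linarith
qed (simp add: rho_def)

lemma rho_le: "0 \<le> Y \<Longrightarrow> (\<And>s. s \<in> obs d t \<Longrightarrow> \<bar>y s\<bar> \<le> Y) \<Longrightarrow> rho y d t \<le> Y"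
  unfolding rho_def using finite_obs[of d t] by (auto simp: Max_le_iff)

lemma rho_mono: "obs d t \<subseteq> obs d t' \<Longrightarrow> rho y d t \<le> rho y d t'"
  by (intro rho_le rho_nonneg abs_le_rho) auto

lemma rho_1: "rho y d 1 = 0"
  unfolding rho_def obs_def by simp

section \<open>Ridge regression and the Vovk--Azoury--Warmuth step\<close>

definition label_comb :: "(nat \<Rightarrow> nat \<Rightarrow> real) \<Rightarrow> (nat \<Rightarrow> real) \<Rightarrow> nat set \<Rightarrow> nat \<Rightarrow> real" where
  "label_comb z y S i = (\<Sum>\<tau>\<in>S. y \<tau> * z \<tau> i)"

lemma vinner_label_comb: "vinner n (label_comb z y S) x = (\<Sum>\<tau>\<in>S. y \<tau> * vinner n (z \<tau>) x)"
  unfolding label_comb_def by (rule vinner_sum_left)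

lemma label_comb_insert:
  "finite S \<Longrightarrow> t \<notin> S \<Longrightarrow> label_comb z y (insert t S) = (\<lambda>i. label_comb z y S i + y t * z t i)"
  unfolding label_comb_def by (simp add: add.commute)

lemma gram_inv_label_comb_le:
  assumes "finite S" "0 < e" "S' \<subseteq> S" "\<And>\<tau>. \<tau> \<in> S' \<Longrightarrow> \<bar>y \<tau>\<bar> \<le> r"
  shows "gram n e z S (gram_inv n e z S (label_comb z y S')) (gram_inv n e z S (label_comb z y S'))
    \<le> real (card S') * r\<^sup>2"
proof -
  define x where "x = gram_inv n e z S (label_comb z y S')"
  define q where "q \<tau> = vinner n (z \<tau>) x" for \<tau>
  have "(\<Sum>\<tau>\<in>S'. (q \<tau>)\<^sup>2) \<le> (\<Sum>\<tau>\<in>S. (q \<tau>)\<^sup>2)" using assms(1,3) by (intro sum_mono2) auto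
  also have "\<dots> \<le> gram n e z S x x"
    unfolding gram_def q_def using assms(2) vinner_self_nonneg[of n x] by (simp add: power2_eq_square)
  finally have q_le: "(\<Sum>\<tau>\<in>S'. (q \<tau>)\<^sup>2) \<le> gram n e z S x x" .
  have "gram n e z S x x = (\<Sum>\<tau>\<in>S'. y \<tau> * q \<tau>)"
    unfolding x_def q_def using assms(1,2) by (simp add: gram_inv_gram vinner_label_comb)
  also have "\<dots> \<le> (\<Sum>\<tau>\<in>S'. (r\<^sup>2 + (q \<tau>)\<^sup>2) / 2)"
  proof (intro sum_mono)
    fix \<tau> assume "\<tau> \<in> S'"
    then have "(y \<tau>)\<^sup>2 \<le> r\<^sup>2" using assms(4) by (metis abs_ge_zero power2_abs power_mono)
    then show "y \<tau> * q \<tau> \<le> (r\<^sup>2 + (q \<tau>)\<^sup>2) / 2" using sum_squares_bound[of "y \<tau>" "q \<tau>"] by simp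
  qed
  also have "\<dots> = (real (card S') * r\<^sup>2 + (\<Sum>\<tau>\<in>S'. (q \<tau>)\<^sup>2)) / 2"
    by (simp add: sum.distrib sum_divide_distrib[symmetric])
  finally show ?thesis using q_le unfolding x_def by simp
qed

definition ridge_loss :: "nat \<Rightarrow> real \<Rightarrow> (nat \<Rightarrow> nat \<Rightarrow> real) \<Rightarrow> (nat \<Rightarrow> real) \<Rightarrow> nat set
    \<Rightarrow> (nat \<Rightarrow> real) \<Rightarrow> real" where
  "ridge_loss n e z y S x = (\<Sum>\<tau>\<in>S. (vinner n (z \<tau>) x - y \<tau>)\<^sup>2 / 2) + e / 2 * vinner n x x"

definition ridge_min :: "nat \<Rightarrow> real \<Rightarrow> (nat \<Rightarrow> nat \<Rightarrow> real) \<Rightarrow> (nat \<Rightarrow> real) \<Rightarrow> nat set \<Rightarrow> real" where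
  "ridge_min n e z y S = ridge_loss n e z y S (gram_inv n e z S (label_comb z y S))"

lemma ridge_loss_eq_gram:
  "ridge_loss n e z y S x
    = gram n e z S x x / 2 - vinner n (label_comb z y S) x + (\<Sum>\<tau>\<in>S. (y \<tau>)\<^sup>2) / 2"
proof -
  have "(\<Sum>\<tau>\<in>S. (vinner n (z \<tau>) x - y \<tau>)\<^sup>2 / 2)
      = (\<Sum>\<tau>\<in>S. vinner n (z \<tau>) x * vinner n (z \<tau>) x / 2 - y \<tau> * vinner n (z \<tau>) x + (y \<tau>)\<^sup>2 / 2)"
    by (intro sum.cong) (auto simp: power2_eq_square field_simps)
  then show ?thesis
    unfolding ridge_loss_def gram_def vinner_label_comb
    by (simp add: sum.distrib sum_subtractf sum_divide_distrib[symmetric] algebra_simps)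
qed

lemma ridge_loss_nonneg: "0 \<le> e \<Longrightarrow> 0 \<le> ridge_loss n e z y S x"
  unfolding ridge_loss_def by (simp add: sum_nonneg vinner_self_nonneg)

lemma ridge_min_le:
  "finite S \<Longrightarrow> 0 < e \<Longrightarrow> ridge_min n e z y S \<le> ridge_loss n e z y S x"
  unfolding ridge_min_def ridge_loss_eq_gram using gram_solution_min[OF gram_inv_solution] by simp

lemma ridge_min_eq:
  assumes "finite S" "0 < e"
  shows "ridge_min n e z y S = ((\<Sum>\<tau>\<in>S. (y \<tau>)\<^sup>2)
    - vinner n (label_comb z y S) (gram_inv n e z S (label_comb z y S))) / 2"
  unfolding ridge_min_def ridge_loss_eq_gram using gram_inv_gram[OF assms] by simp

lemma ridge_min_le_drop:
  assumes "finite S" "t \<notin> S" "0 < e'" "e' \<le> e"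
  shows "ridge_min n e' z y S \<le> (gram n e z (insert t S) x x - (vinner n (z t) x)\<^sup>2) / 2
    - vinner n (label_comb z y S) x + (\<Sum>\<tau>\<in>S. (y \<tau>)\<^sup>2) / 2"
proof -
  have "ridge_min n e' z y S \<le> ridge_loss n e' z y S x" using ridge_min_le assms by blast
  also have "\<dots> \<le> gram n e z S x x / 2 - vinner n (label_comb z y S) x + (\<Sum>\<tau>\<in>S. (y \<tau>)\<^sup>2) / 2"
    using gram_self_mono[OF assms(4,1) order_refl] unfolding ridge_loss_eq_gram by simp
  finally show ?thesis using gram_insert[OF assms(1,2)] by (simp add: power2_eq_square)
qed

text \<open>With \<open>x = A\<^sup>-\<^sup>1 c\<^sub>S\<close>, \<open>v = A\<^sup>-\<^sup>1 z\<^sub>t\<close>,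
  \<open>p = \<langle>z\<^sub>t, x\<rangle>\<close> and \<open>w = \<langle>z\<^sub>t, v\<rangle>\<close>, the new minimiser is \<open>x + y\<^sub>t v\<close>, and the old potential is
  evaluated at \<open>x + p v\<close>; the bound then holds with slack \<open>p\<^sup>2 w (1 + w) / 2\<close>.\<close>

lemma ridge_min_step:
  assumes S: "finite S" "t \<notin> S" and e: "0 < e'" "e' \<le> e"
  shows "(vinner n (z t) (gram_inv n e z (insert t S) (label_comb z y S)) - y t)\<^sup>2 / 2
    \<le> ridge_min n e z y (insert t S) - ridge_min n e' z y S
      + (y t)\<^sup>2 * dual_sqnorm n e z (insert t S) (z t) / 2"
proof -
  let ?S' = "insert t S" and ?c = "label_comb z y S"
  let ?g = "gram n e z ?S'"
  define x where "x = gram_inv n e z ?S' ?c"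
  define v where "v = gram_inv n e z ?S' (z t)"
  define p where "p = vinner n (z t) x"
  define P where "P = ?g x x"
  define w where "w = dual_sqnorm n e z ?S' (z t)"
  define K where "K = (\<Sum>\<tau>\<in>S. (y \<tau>)\<^sup>2)"
  have fin: "finite ?S'" and e_pos: "0 < e" using S e by auto
  have sx: "gram_solution n e z ?S' ?c x" and sv: "gram_solution n e z ?S' (z t) v"
    unfolding x_def v_def using gram_inv_solution[OF fin e_pos] by auto
  have w: "w = ?g v v" "w = vinner n (z t) v" "0 \<le> w"
    unfolding w_def v_def using dual_sqnorm_eq_gram[OF fin e_pos] dual_sqnorm_nonneg[OF fin e_pos]
    by (simp_all add: dual_sqnorm_def)
  have gxv: "?g x v = p" and cv: "vinner n ?c v = p" and cx: "vinner n ?c x = P"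
    using sx sv unfolding gram_solution_def p_def P_def by (metis gram_commute)+
  have c': "label_comb z y ?S' = (\<lambda>i. ?c i + y t * z t i)" using label_comb_insert[OF S] .
  define x\<^sub>1 where "x\<^sub>1 i = x i + y t * v i" for i
  have "gram_solution n e z ?S' (label_comb z y ?S') x\<^sub>1"
    unfolding c' x\<^sub>1_def using sx sv by (rule gram_solution_add_scaled)
  moreover have "vinner n (label_comb z y ?S') x\<^sub>1 = P + 2 * y t * p + (y t)\<^sup>2 * w"
    unfolding c' x\<^sub>1_def vinner_bilinear cv cx p_def[symmetric] w(2)[symmetric]
    by (simp add: power2_eq_square algebra_simps)
  ultimately have new: "ridge_min n e z y ?S' = (K + (y t)\<^sup>2 - (P + 2 * y t * p + (y t)\<^sup>2 * w)) / 2"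
    using ridge_min_eq[OF fin e_pos] gram_inv_eq[OF fin e_pos] S unfolding K_def by simp
  define x\<^sub>2 where "x\<^sub>2 i = x i + p * v i" for i
  have "?g x\<^sub>2 x\<^sub>2 = P + 2 * p * p + p\<^sup>2 * w"
    unfolding x\<^sub>2_def gram_square_add gxv w(1)[symmetric] P_def ..
  moreover have "vinner n (z t) x\<^sub>2 = p + p * w" "vinner n ?c x\<^sub>2 = P + p * p"
    unfolding x\<^sub>2_def vinner_bilinear cv cx p_def[symmetric] w(2)[symmetric] by simp_all
  ultimately have old: "ridge_min n e' z y S
      \<le> (P + 2 * p * p + p\<^sup>2 * w - (p + p * w)\<^sup>2) / 2 - (P + p * p) + K / 2"
    using ridge_min_le_drop[OF S e, of n z y x\<^sub>2] unfolding K_def by simp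
  have "(p - y t)\<^sup>2 / 2 + p\<^sup>2 * w * (1 + w) / 2
      = (K + (y t)\<^sup>2 - (P + 2 * y t * p + (y t)\<^sup>2 * w)) / 2
        - ((P + 2 * p * p + p\<^sup>2 * w - (p + p * w)\<^sup>2) / 2 - (P + p * p) + K / 2) + (y t)\<^sup>2 * w / 2"
    by (simp add: power2_eq_square field_simps)
  moreover have "0 \<le> p\<^sup>2 * w * (1 + w)" using w(3) by simp
  ultimately show ?thesis using new old unfolding x_def w_def p_def by linarith
qed

section \<open>The delayed forecaster\<close>

lemma vaw_obj_eq_gram:
  "vaw_obj n z y d \<eta> t x = gram n (\<eta> t) z {1..t} x x / 2 - vinner n (label_comb z y (obs d t)) x"
  unfolding vaw_obj_def gram_def vinner_label_comb vnorm_sq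
  by (simp add: sum_negf power2_eq_square algebra_simps sum_divide_distrib[symmetric])

lemma vaw_x_eq_gram_inv:
  assumes "0 < \<eta> t"
  shows "vaw_x n z y d \<eta> t = gram_inv n (\<eta> t) z {1..t} (label_comb z y (obs d t))"
  unfolding vaw_x_def
proof (rule the_equality)
  let ?x\<^sub>0 = "gram_inv n (\<eta> t) z {1..t} (label_comb z y (obs d t))"
  have s: "gram_solution n (\<eta> t) z {1..t} (label_comb z y (obs d t)) ?x\<^sub>0"
    using gram_inv_solution[OF _ assms] by simp
  show "in_Rn n ?x\<^sub>0 \<and> (\<forall>x'. in_Rn n x' \<longrightarrow> vaw_obj n z y d \<eta> t ?x\<^sub>0 \<le> vaw_obj n z y d \<eta> t x')"
    using s gram_solution_min[OF s] assms unfolding vaw_obj_eq_gram gram_solution_def by auto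
  fix x assume x: "in_Rn n x \<and> (\<forall>x'. in_Rn n x' \<longrightarrow> vaw_obj n z y d \<eta> t x \<le> vaw_obj n z y d \<eta> t x')"
  then have "vaw_obj n z y d \<eta> t x \<le> vaw_obj n z y d \<eta> t ?x\<^sub>0" using s unfolding gram_solution_def by blast
  then have "gram n (\<eta> t) z {1..t} (\<lambda>i. x i - ?x\<^sub>0 i) (\<lambda>i. x i - ?x\<^sub>0 i) \<le> 0"
    using gram_solution_excess[OF s, of x] unfolding vaw_obj_eq_gram by simp
  then have "\<forall>i<n. x i - ?x\<^sub>0 i = 0" by (rule gram_self_eq_0[OF assms])
  then show "x = ?x\<^sub>0" using x s unfolding gram_solution_def by (intro in_Rn_eqI) auto
qed

lemma inner_vaw_play:
  "vinner n (z t) (vaw_play n z y d \<eta> t) = clip (rho y d t) (vinner n (z t) (vaw_x n z y d \<eta> t))"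
proof -
  define p where "p = vinner n (z t) (vaw_x n z y d \<eta> t)"
  have r: "0 \<le> rho y d t" by (rule rho_nonneg)
  have "min (rho y d t / \<bar>p\<bar>) 1 * p = clip (rho y d t) p" if "p \<noteq> 0"
    using r that by (cases "0 < p") (auto simp: clip_def min_def max_def field_simps)
  then show ?thesis
    unfolding vaw_play_def Let_def p_def[symmetric]
    by (cases "p = 0") (simp_all add: vinner_scale_right p_def clip_def r)
qed

locale delayed_vaw =
  fixes n T :: nat and z :: "nat \<Rightarrow> nat \<Rightarrow> real" and y :: "nat \<Rightarrow> real" and d :: "nat \<Rightarrow> nat"
    and \<eta> :: "nat \<Rightarrow> real" and Y Z :: real
  assumes n_pos: "1 \<le> n"
    and delays_within: "\<forall>t\<in>{1..T}. t + d t \<le> T"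
    and Y_nonneg: "0 \<le> Y"
    and z_le: "\<forall>t\<in>{1..T}. vnorm n (z t) \<le> Z"
    and y_le: "\<forall>t\<in>{1..T}. \<bar>y t\<bar> \<le> Y"
    and eta_0: "0 < \<eta> 0"
    and eta_Suc: "\<forall>t<T. \<eta> t \<le> \<eta> (Suc t)"
begin

lemma eta_mono: "s \<le> t \<Longrightarrow> t \<le> T \<Longrightarrow> \<eta> s \<le> \<eta> t"
proof (induction t)
  case (Suc t)
  show ?case
  proof (cases "s = Suc t")
    case False
    then have "\<eta> s \<le> \<eta> t" using Suc by simp
    also have "\<eta> t \<le> \<eta> (Suc t)" using eta_Suc Suc.prems by simp
    finally show ?thesis .
  qed simp
qed simp

lemma eta_pos: "t \<le> T \<Longrightarrow> 0 < \<eta> t"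
  using eta_mono[of 0 t] eta_0 by simp

lemma y_sq_le: "t \<in> {1..T} \<Longrightarrow> (y t)\<^sup>2 \<le> Y\<^sup>2"
  using y_le by (metis abs_ge_zero power2_abs power_mono)

lemma vinner_self_z_le:
  assumes "t \<in> {1..T}"
  shows "vinner n (z t) (z t) \<le> Z\<^sup>2"
proof -
  have "0 \<le> vnorm n (z t)" unfolding vnorm_def by (simp add: sum_nonneg)
  then show ?thesis using z_le assms power_mono[of "vnorm n (z t)" Z 2] by (simp add: vnorm_sq)
qed

lemma rho_le_Y: "t \<le> Suc T \<Longrightarrow> rho y d t \<le> Y"
  using Y_nonneg y_le obs_subset[of d t] by (intro rho_le) fastforce+

definition leverage :: "nat \<Rightarrow> real" where
  "leverage t = dual_sqnorm n (\<eta> t) z {1..t} (z t)"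

definition log_bound :: real where
  "log_bound = real n * ln (1 + Z\<^sup>2 * real T / (\<eta> 0 * real n))"

definition delay_term :: real where
  "delay_term = min (real (d_max T d) * log_bound) (Z\<^sup>2 * (\<Sum>t=1..T. real (card (miss d t)) / \<eta> t))"

definition pred :: "nat \<Rightarrow> real" where
  "pred t = vinner n (z t) (vaw_x n z y d \<eta> t)"

definition pred_undelayed :: "nat \<Rightarrow> real" where
  "pred_undelayed t = vinner n (z t) (gram_inv n (\<eta> t) z {1..t} (label_comb z y {1..t - 1}))"

lemma leverage_nonneg: "t \<le> T \<Longrightarrow> 0 \<le> leverage t"
  unfolding leverage_def using dual_sqnorm_nonneg eta_pos by simp

lemma leverage_le: "t \<in> {1..T} \<Longrightarrow> leverage t \<le> Z\<^sup>2 / \<eta> t"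
  unfolding leverage_def using dual_sqnorm_le[of "{1..t}" "\<eta> t"] eta_pos vinner_self_z_le
  by (smt (verit) atLeastAtMost_iff divide_right_mono finite_atLeastAtMost)

lemma log_bound_nonneg: "0 \<le> log_bound"
  unfolding log_bound_def using eta_0 n_pos by (simp add: zero_le_divide_iff)

lemma delay_term_nonneg: "0 \<le> delay_term"
proof -
  have "0 \<le> \<eta> t" if "t \<in> {1..T}" for t using eta_pos[of t] that by simp
  then have "0 \<le> (\<Sum>t=1..T. real (card (miss d t)) / \<eta> t)" by (intro sum_nonneg divide_nonneg_nonneg) auto
  then show ?thesis unfolding delay_term_def using log_bound_nonneg by simp
qed

lemma sum_leverage_le: "(\<Sum>t=1..T. leverage t) \<le> log_bound"
proof -
  have "(\<Sum>t=1..T. leverage t) \<le> (\<Sum>t=1..T. dual_sqnorm n (\<eta> 0) z {1..t} (z t))"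
    unfolding leverage_def using eta_0 eta_mono by (intro sum_mono dual_sqnorm_antimono) auto
  also have "\<dots> \<le> real n * ln (1 + (\<Sum>t=1..T. vinner n (z t) (z t)) / (\<eta> 0 * real n))"
    by (rule elliptical_potential[OF eta_0 n_pos])
  also have "\<dots> \<le> log_bound"
  proof -
    have "(\<Sum>t=1..T. vinner n (z t) (z t)) \<le> Z\<^sup>2 * real T"
      using sum_mono[of "{1..T}" "\<lambda>t. vinner n (z t) (z t)" "\<lambda>_. Z\<^sup>2"] vinner_self_z_le
      by (simp add: mult.commute)
    moreover have "0 \<le> (\<Sum>t=1..T. vinner n (z t) (z t))" by (simp add: sum_nonneg vinner_self_nonneg)
    ultimately have "1 + (\<Sum>t=1..T. vinner n (z t) (z t)) / (\<eta> 0 * real n)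
        \<le> 1 + Z\<^sup>2 * real T / (\<eta> 0 * real n)"
      "0 < 1 + (\<Sum>t=1..T. vinner n (z t) (z t)) / (\<eta> 0 * real n)"
      using eta_0 n_pos by (auto intro!: divide_right_mono add_pos_nonneg)
    then show ?thesis unfolding log_bound_def by (intro mult_left_mono) auto
  qed
  finally show ?thesis .
qed

lemma regret_eq:
  "regret n T z y d \<eta> u
    = (\<Sum>t=1..T. ((clip (rho y d t) (pred t) - y t)\<^sup>2 - (vinner n (z t) u - y t)\<^sup>2) / 2)"
  unfolding regret_def sqloss_def inner_vaw_play pred_def by (simp add: diff_divide_distrib)

lemma sum_undelayed_loss_le:
  "(\<Sum>t=1..T. (pred_undelayed t - y t)\<^sup>2 / 2)
    \<le> (\<Sum>t=1..T. (vinner n (z t) u - y t)\<^sup>2 / 2) + \<eta> T / 2 * (vnorm n u)\<^sup>2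
      + (\<Sum>t=1..T. (y t)\<^sup>2 * leverage t / 2)"
proof -
  define R where "R t = ridge_min n (\<eta> t) z y {1..t}" for t
  have "(pred_undelayed t - y t)\<^sup>2 / 2 \<le> R t - R (t - 1) + (y t)\<^sup>2 * leverage t / 2"
    if t: "t \<in> {1..T}" for t
  proof -
    have "{1..t} = insert t {1..t - 1}" "t \<notin> {1..t - 1}" using t by auto
    then show ?thesis
      using ridge_min_step[of "{1..t - 1}" t "\<eta> (t - 1)" "\<eta> t" n z y] t eta_pos eta_mono
      unfolding R_def pred_undelayed_def leverage_def by simp
  qed
  then have "(\<Sum>t=1..T. (pred_undelayed t - y t)\<^sup>2 / 2)
      \<le> (\<Sum>t=1..T. R t - R (t - 1)) + (\<Sum>t=1..T. (y t)\<^sup>2 * leverage t / 2)"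
    by (subst sum.distrib[symmetric]) (rule sum_mono)
  also have "(\<Sum>t=1..T. R t - R (t - 1)) = R T - R 0" using sum_telescope''[of 0 T R] by simp
  moreover have "0 \<le> R 0" unfolding R_def ridge_min_def using eta_0 by (simp add: ridge_loss_nonneg)
  moreover have "R T \<le> ridge_loss n (\<eta> T) z y {1..T} u"
    unfolding R_def using eta_pos by (simp add: ridge_min_le)
  ultimately show ?thesis unfolding ridge_loss_def vnorm_sq by linarith
qed

lemma regret_le_clip_excess:
  "regret n T z y d \<eta> u \<le> \<eta> T / 2 * (vnorm n u)\<^sup>2 + Y\<^sup>2 * log_bound / 2
    + (\<Sum>t=1..T. (clip (rho y d t) (pred t) - y t)\<^sup>2 - (pred_undelayed t - y t)\<^sup>2) / 2"
proof -
  have "(\<Sum>t=1..T. (y t)\<^sup>2 * leverage t / 2) \<le> (\<Sum>t=1..T. Y\<^sup>2 * leverage t / 2)"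
    using y_sq_le leverage_nonneg by (intro sum_mono divide_right_mono mult_right_mono) auto
  also have "\<dots> \<le> Y\<^sup>2 * log_bound / 2"
    using sum_leverage_le mult_left_mono[of _ _ "Y\<^sup>2 / 2"]
    by (simp add: sum_distrib_left[symmetric] sum_divide_distrib[symmetric])
  finally have "(\<Sum>t=1..T. (y t)\<^sup>2 * leverage t / 2) \<le> Y\<^sup>2 * log_bound / 2" .
  then show ?thesis
    using sum_undelayed_loss_le[of u] unfolding regret_eq
    by (simp add: sum_subtractf sum_divide_distrib[symmetric] diff_divide_distrib)
qed

lemma pred_undelayed_minus_pred:
  assumes t: "t \<in> {1..T}"
  shows "pred_undelayed t - pred t
    = (\<Sum>\<tau>\<in>miss d t. y \<tau> * vinner n (z \<tau>) (gram_inv n (\<eta> t) z {1..t} (z t)))"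
proof -
  have e: "0 < \<eta> t" using eta_pos t by simp
  let ?v = "gram_inv n (\<eta> t) z {1..t} (z t)"
  have pred_eq: "vinner n (z t) (gram_inv n (\<eta> t) z {1..t} (label_comb z y S))
      = (\<Sum>\<tau>\<in>S. y \<tau> * vinner n (z \<tau>) ?v)" for S
    using gram_inv_symmetric[OF _ e, of "{1..t}" n "z t" z "label_comb z y S"]
    by (simp add: vinner_label_comb)
  have "(\<Sum>\<tau>\<in>{1..t - 1}. y \<tau> * vinner n (z \<tau>) ?v)
      = (\<Sum>\<tau>\<in>miss d t. y \<tau> * vinner n (z \<tau>) ?v) + (\<Sum>\<tau>\<in>obs d t. y \<tau> * vinner n (z \<tau>) ?v)"
    unfolding miss_def using obs_subset by (intro sum.subset_diff) auto
  then show ?thesis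
    unfolding pred_undelayed_def pred_def vaw_x_eq_gram_inv[of \<eta> t, OF e] pred_eq by simp
qed

lemma abs_pred_diff_le:
  assumes t: "t \<in> {1..T}"
  shows "\<bar>pred t - pred_undelayed t\<bar> \<le> Y * (\<Sum>\<tau>\<in>miss d t. (leverage \<tau> + leverage t) / 2)"
    and "\<bar>pred t - pred_undelayed t\<bar> \<le> Y * (Z\<^sup>2 * real (card (miss d t)) / \<eta> t)"
proof -
  have e: "0 < \<eta> t" using eta_pos t by simp
  define c where "c \<tau> = vinner n (z \<tau>) (gram_inv n (\<eta> t) z {1..t} (z t))" for \<tau>
  have "\<bar>pred t - pred_undelayed t\<bar> = \<bar>\<Sum>\<tau>\<in>miss d t. y \<tau> * c \<tau>\<bar>"
    using pred_undelayed_minus_pred[OF t] unfolding c_def by simp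
  also have "\<dots> \<le> (\<Sum>\<tau>\<in>miss d t. Y * \<bar>c \<tau>\<bar>)"
    using y_le t by (intro order_trans[OF sum_abs] sum_mono) (auto simp: abs_mult miss_iff mult_right_mono)
  finally have sum_le: "\<bar>pred t - pred_undelayed t\<bar> \<le> Y * (\<Sum>\<tau>\<in>miss d t. \<bar>c \<tau>\<bar>)"
    by (simp add: sum_distrib_left)
  have c_le: "2 * \<bar>c \<tau>\<bar> \<le> dual_sqnorm n (\<eta> t) z {1..t} (z \<tau>) + leverage t" for \<tau>
    unfolding c_def leverage_def using dual_inner_abs_le[OF _ e] by simp
  show "\<bar>pred t - pred_undelayed t\<bar> \<le> Y * (\<Sum>\<tau>\<in>miss d t. (leverage \<tau> + leverage t) / 2)"
  proof -
    have "\<bar>c \<tau>\<bar> \<le> (leverage \<tau> + leverage t) / 2" if "\<tau> \<in> miss d t" for \<tau>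
    proof -
      have "1 \<le> \<tau>" "\<tau> \<le> t" using that by (auto simp: miss_iff)
      then have "dual_sqnorm n (\<eta> t) z {1..t} (z \<tau>) \<le> leverage \<tau>"
        unfolding leverage_def using t eta_pos eta_mono by (intro dual_sqnorm_antimono) auto
      then show ?thesis using c_le[of \<tau>] by simp
    qed
    then show ?thesis using sum_le Y_nonneg by (meson mult_left_mono order_trans sum_mono)
  qed
  show "\<bar>pred t - pred_undelayed t\<bar> \<le> Y * (Z\<^sup>2 * real (card (miss d t)) / \<eta> t)"
  proof -
    have "\<bar>c \<tau>\<bar> \<le> Z\<^sup>2 / \<eta> t" if "\<tau> \<in> miss d t" for \<tau>
    proof -
      have "\<tau> \<in> {1..T}" using that t by (auto simp: miss_iff)
      then have "dual_sqnorm n (\<eta> t) z {1..t} (z \<tau>) \<le> Z\<^sup>2 / \<eta> t"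
        using dual_sqnorm_le[OF _ e] vinner_self_z_le e by (smt (verit) divide_right_mono finite_atLeastAtMost)
      then show ?thesis using c_le[of \<tau>] leverage_le[OF t] by simp
    qed
    then have "(\<Sum>\<tau>\<in>miss d t. \<bar>c \<tau>\<bar>) \<le> Z\<^sup>2 * real (card (miss d t)) / \<eta> t"
      using sum_mono[of "miss d t" "\<lambda>\<tau>. \<bar>c \<tau>\<bar>" "\<lambda>_. Z\<^sup>2 / \<eta> t"] by (simp add: mult.commute)
    then show ?thesis using sum_le Y_nonneg by (meson mult_left_mono order_trans)
  qed
qed

lemma sum_abs_pred_diff_le:
  "(\<Sum>t=1..T. \<bar>pred t - pred_undelayed t\<bar>)
    \<le> Y * delay_term"
proof -
  have "(\<Sum>t=1..T. \<bar>pred t - pred_undelayed t\<bar>)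
      \<le> (\<Sum>t=1..T. Y * (\<Sum>\<tau>\<in>miss d t. (leverage \<tau> + leverage t) / 2))"
    using abs_pred_diff_le(1) by (intro sum_mono) auto
  also have "\<dots> = Y / 2 * ((\<Sum>t=1..T. \<Sum>\<tau>\<in>miss d t. leverage \<tau>)
      + (\<Sum>t=1..T. real (card (miss d t)) * leverage t))"
    by (simp add: sum_distrib_left sum.distrib add_divide_distrib algebra_simps
        sum_divide_distrib[symmetric])
  also have "\<dots> \<le> Y / 2 * (real (d_max T d) * log_bound + real (d_max T d) * log_bound)"
  proof (intro mult_left_mono add_mono)
    have "(\<Sum>t=1..T. \<Sum>\<tau>\<in>miss d t. leverage \<tau>) \<le> real (d_max T d) * (\<Sum>t=1..T. leverage t)"
      using leverage_nonneg by (intro sum_miss_le_d_max) auto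
    also have "\<dots> \<le> real (d_max T d) * log_bound" using sum_leverage_le by (simp add: mult_left_mono)
    finally show "(\<Sum>t=1..T. \<Sum>\<tau>\<in>miss d t. leverage \<tau>) \<le> real (d_max T d) * log_bound" .
    have "(\<Sum>t=1..T. real (card (miss d t)) * leverage t) \<le> (\<Sum>t=1..T. real (d_max T d) * leverage t)"
      using card_miss_le_d_max leverage_nonneg by (intro sum_mono mult_right_mono) auto
    also have "\<dots> \<le> real (d_max T d) * log_bound"
      using sum_leverage_le by (simp add: sum_distrib_left[symmetric] mult_left_mono)
    finally show "(\<Sum>t=1..T. real (card (miss d t)) * leverage t) \<le> real (d_max T d) * log_bound" .
  qed (use Y_nonneg in simp)
  finally have bound1: "(\<Sum>t=1..T. \<bar>pred t - pred_undelayed t\<bar>) \<le> Y * (real (d_max T d) * log_bound)"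
    by (simp add: algebra_simps)
  have "(\<Sum>t=1..T. \<bar>pred t - pred_undelayed t\<bar>)
      \<le> (\<Sum>t=1..T. Y * (Z\<^sup>2 * real (card (miss d t)) / \<eta> t))"
    using abs_pred_diff_le(2) by (intro sum_mono) auto
  then have bound2: "(\<Sum>t=1..T. \<bar>pred t - pred_undelayed t\<bar>)
      \<le> Y * (Z\<^sup>2 * (\<Sum>t=1..T. real (card (miss d t)) / \<eta> t))"
    by (simp add: sum_distrib_left mult.assoc)
  show ?thesis using bound1 bound2 Y_nonneg unfolding delay_term_def by (simp add: min_mult_distrib_left)
qed

lemma sum_clip_gap_le: "(\<Sum>t=1..T. max 0 ((y t)\<^sup>2 - (rho y d t)\<^sup>2)) \<le> real (sigma_max T d + 1) * Y\<^sup>2"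
proof (rule sum_excess_le_top_k)
  show "finite (miss d t) \<and> card (miss d t) < sigma_max T d + 1" if "t \<in> {1..T}" for t
    using finite_miss card_miss_le_sigma_max[OF that] by (simp add: less_Suc_eq_le)
  show "(y s)\<^sup>2 \<le> (rho y d t)\<^sup>2" if "s \<in> {1..t - 1} - miss d t" for t s
  proof -
    have "s \<in> obs d t" using that unfolding miss_def by auto
    then show ?thesis using abs_le_rho by (metis abs_ge_zero power2_abs power_mono)
  qed
qed (use y_sq_le in auto)

lemma sum_clip_excess_le:
  "(\<Sum>t=1..T. (clip (rho y d t) (pred t) - y t)\<^sup>2 - (pred_undelayed t - y t)\<^sup>2)
    \<le> 5 * (Y\<^sup>2 * delay_term) + (real (sigma_max T d) + 1) * Y\<^sup>2"
proof -
  have "(\<Sum>t=1..T. (clip (rho y d t) (pred t) - y t)\<^sup>2 - (pred_undelayed t - y t)\<^sup>2)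
      \<le> (\<Sum>t=1..T. 5 * Y * \<bar>pred t - pred_undelayed t\<bar> + max 0 ((y t)\<^sup>2 - (rho y d t)\<^sup>2))"
    using rho_nonneg rho_le_Y y_le by (intro sum_mono clip_sq_loss_le_perturbed) auto
  also have "\<dots> = 5 * Y * (\<Sum>t=1..T. \<bar>pred t - pred_undelayed t\<bar>)
      + (\<Sum>t=1..T. max 0 ((y t)\<^sup>2 - (rho y d t)\<^sup>2))"
    by (simp add: sum.distrib sum_distrib_left)
  also have "\<dots> \<le> 5 * Y * (Y * delay_term) + real (sigma_max T d + 1) * Y\<^sup>2"
    using Y_nonneg by (intro add_mono mult_left_mono sum_abs_pred_diff_le sum_clip_gap_le) auto
  finally show ?thesis by (simp add: power2_eq_square algebra_simps)
qed

lemma obs_eq_if_no_missing: "sigma_max T d = 0 \<Longrightarrow> t \<in> {1..Suc T} \<Longrightarrow> obs d t = {1..t - 1}"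
  using obs_eq_if_sigma_max_0 delays_within by blast

lemma abs_pred_undelayed_le:
  assumes "sigma_max T d = 0" and t: "t \<in> {1..T}"
  shows "\<bar>pred_undelayed t\<bar> \<le> rho y d t * sqrt (Z\<^sup>2 * real T / \<eta> 0)"
proof -
  have e: "0 < \<eta> t" using eta_pos t by simp
  let ?x = "gram_inv n (\<eta> t) z {1..t} (label_comb z y {1..t - 1})"
  let ?r = "rho y d t"
  have "gram n (\<eta> t) z {1..t} ?x ?x \<le> real (card {1..t - 1}) * ?r\<^sup>2"
    using obs_eq_if_no_missing[OF assms(1)] t abs_le_rho[of _ d t y]
    by (intro gram_inv_label_comb_le e) auto
  also have "\<dots> \<le> real T * ?r\<^sup>2" using t by (intro mult_right_mono) auto
  finally have P: "gram n (\<eta> t) z {1..t} ?x ?x \<le> real T * ?r\<^sup>2" .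
  have "leverage t \<le> Z\<^sup>2 / \<eta> t" by (rule leverage_le[OF t])
  also have "\<dots> \<le> Z\<^sup>2 / \<eta> 0" using eta_mono[of 0 t] t eta_0 by (intro divide_left_mono) auto
  finally have L: "leverage t \<le> Z\<^sup>2 / \<eta> 0" .
  have "(pred_undelayed t)\<^sup>2 \<le> leverage t * gram n (\<eta> t) z {1..t} ?x ?x"
    unfolding pred_undelayed_def leverage_def using inner_gram_inv_sq_le[OF _ e] by simp
  also have "\<dots> \<le> Z\<^sup>2 / \<eta> 0 * (real T * ?r\<^sup>2)"
    using L P leverage_nonneg[of t] t gram_self_nonneg[of "\<eta> t"] e by (intro mult_mono) auto
  finally have "sqrt ((pred_undelayed t)\<^sup>2) \<le> sqrt (Z\<^sup>2 * real T / \<eta> 0 * ?r\<^sup>2)"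
    by (intro real_sqrt_le_mono) simp
  moreover have "sqrt (Z\<^sup>2 * real T / \<eta> 0 * ?r\<^sup>2) = ?r * sqrt (Z\<^sup>2 * real T / \<eta> 0)"
    unfolding real_sqrt_mult using rho_nonneg[of y d t] by simp
  ultimately show ?thesis by simp
qed

definition shortfall :: "nat \<Rightarrow> real" where
  "shortfall t = max 0 (\<bar>y t\<bar> - rho y d t)"

lemma sum_shortfall_le:
  assumes "sigma_max T d = 0"
  shows "(\<Sum>t=1..T. shortfall t) \<le> Y"
proof -
  have "shortfall t \<le> rho y d (Suc t) - rho y d t" if t: "t \<in> {1..T}" for t
  proof -
    have "obs d t = {1..t - 1}" "obs d (Suc t) = {1..t}"
      using obs_eq_if_no_missing[OF assms, of t] obs_eq_if_no_missing[OF assms, of "Suc t"] t by auto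
    then have "\<bar>y t\<bar> \<le> rho y d (Suc t)" "rho y d t \<le> rho y d (Suc t)"
      using t abs_le_rho[of t d "Suc t" y] rho_mono[of d t "Suc t" y] by auto
    then show ?thesis unfolding shortfall_def by simp
  qed
  then have "(\<Sum>t=1..T. shortfall t) \<le> (\<Sum>t=1..T. rho y d (Suc t) - rho y d t)"
    by (rule sum_mono)
  also have "\<dots> = rho y d (Suc T) - rho y d 1" by (rule sum_Suc_diff) simp
  finally show ?thesis using rho_le_Y[of "Suc T"] rho_1[of y d] by linarith
qed

text \<open>Without missing labels the forecaster is the clipped VAW forecaster, and clipping at the
  largest label seen so far only hurts by the shortfall of \<open>\<rho>\<^sub>t\<close> below \<open>\<bar>y\<^sub>t\<bar>\<close>. The shortfalls
  sum to at most \<open>Y\<close>, and VAW forecasts are at most \<open>\<rho>\<^sub>t \<surd>(Z\<^sup>2 T / \<eta>\<^sub>0)\<close>.\<close>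

lemma clip_excess_le_if_no_missing:
  assumes "sigma_max T d = 0" and t: "t \<in> {1..T}"
  shows "(clip (rho y d t) (pred t) - y t)\<^sup>2 - (pred_undelayed t - y t)\<^sup>2
      \<le> 2 * (Y * max 0 (sqrt (Z\<^sup>2 * real T / \<eta> 0) - 1)) * shortfall t"
    and "(clip (rho y d t) (pred t) - y t)\<^sup>2 - (pred_undelayed t - y t)\<^sup>2 \<le> Y * shortfall t"
proof -
  define m where "m = max 0 (sqrt (Z\<^sup>2 * real T / \<eta> 0) - 1)"
  have r: "0 \<le> rho y d t" by (rule rho_nonneg)
  have "\<bar>y t\<bar> \<le> Y" using y_le t by blast
  then have R: "0 \<le> shortfall t" "shortfall t \<le> Y" using r Y_nonneg unfolding shortfall_def by auto
  have "miss d t = {}"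
    using obs_eq_if_no_missing[OF assms(1), of t] t unfolding miss_def by auto
  then have "pred t = pred_undelayed t" using pred_undelayed_minus_pred[OF t] by simp
  then have exc: "(clip (rho y d t) (pred t) - y t)\<^sup>2 - (pred_undelayed t - y t)\<^sup>2
      \<le> 2 * max 0 (\<bar>pred_undelayed t\<bar> - rho y d t) * shortfall t"
    "(clip (rho y d t) (pred t) - y t)\<^sup>2 - (pred_undelayed t - y t)\<^sup>2 \<le> (shortfall t)\<^sup>2"
    using clip_sq_loss_excess[OF r] unfolding shortfall_def by simp_all
  have "\<bar>pred_undelayed t\<bar> - rho y d t \<le> rho y d t * (sqrt (Z\<^sup>2 * real T / \<eta> 0) - 1)"
    using abs_pred_undelayed_le[OF assms] by (simp add: algebra_simps)
  also have "\<dots> \<le> rho y d t * m" unfolding m_def using r by (intro mult_left_mono) auto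
  also have "\<dots> \<le> Y * m" using rho_le_Y[of t] t by (intro mult_right_mono) (auto simp: m_def)
  finally have "max 0 (\<bar>pred_undelayed t\<bar> - rho y d t) \<le> Y * m"
    using Y_nonneg by (simp add: m_def)
  then have "2 * max 0 (\<bar>pred_undelayed t\<bar> - rho y d t) * shortfall t \<le> 2 * (Y * m) * shortfall t"
    using R by (intro mult_right_mono) auto
  then show "(clip (rho y d t) (pred t) - y t)\<^sup>2 - (pred_undelayed t - y t)\<^sup>2
      \<le> 2 * (Y * m) * shortfall t" using exc(1) by linarith
  show "(clip (rho y d t) (pred t) - y t)\<^sup>2 - (pred_undelayed t - y t)\<^sup>2 \<le> Y * shortfall t"
    using exc(2) mult_right_mono[OF R(2) R(1)] by (simp add: power2_eq_square)
qed

lemma sum_clip_excess_le_if_no_missing: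
  assumes "sigma_max T d = 0"
  shows "(\<Sum>t=1..T. (clip (rho y d t) (pred t) - y t)\<^sup>2 - (pred_undelayed t - y t)\<^sup>2) \<le> Y\<^sup>2 * log_bound"
proof -
  define x where "x = Z\<^sup>2 * real T / \<eta> 0"
  define m where "m = max 0 (sqrt x - 1)"
  have x: "0 \<le> x" unfolding x_def using eta_0 by simp
  have m: "0 \<le> m" unfolding m_def by simp
  have shortfall_sum: "(\<Sum>t=1..T. shortfall t) \<le> Y" by (rule sum_shortfall_le[OF assms])
  let ?exc = "\<lambda>t. (clip (rho y d t) (pred t) - y t)\<^sup>2 - (pred_undelayed t - y t)\<^sup>2"
  have "(\<Sum>t=1..T. ?exc t) \<le> (\<Sum>t=1..T. 2 * (Y * m) * shortfall t)"
    using clip_excess_le_if_no_missing(1)[OF assms] unfolding m_def x_def by (rule sum_mono)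
  also have "\<dots> \<le> 2 * (Y * m) * Y"
    using shortfall_sum Y_nonneg m by (simp add: sum_distrib_left[symmetric] mult_left_mono)
  finally have S1: "(\<Sum>t=1..T. ?exc t) \<le> Y\<^sup>2 * (2 * m)" by (simp add: power2_eq_square algebra_simps)
  have "(\<Sum>t=1..T. ?exc t) \<le> (\<Sum>t=1..T. Y * shortfall t)"
    using clip_excess_le_if_no_missing(2)[OF assms] by (rule sum_mono)
  also have "\<dots> \<le> Y * Y"
    using shortfall_sum Y_nonneg by (simp add: sum_distrib_left[symmetric] mult_left_mono)
  finally have S2: "(\<Sum>t=1..T. ?exc t) \<le> Y\<^sup>2 * (2 * (1/2))" by (simp add: power2_eq_square)
  have "(\<Sum>t=1..T. ?exc t) \<le> Y\<^sup>2 * (2 * min m (1/2))"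
    using S1 S2 by (cases "m \<le> 1/2") (auto simp: min_def)
  also have "\<dots> \<le> Y\<^sup>2 * ln (1 + x)"
    unfolding m_def using ln_one_plus_ge_clipped_sqrt[OF x] by (intro mult_left_mono) auto
  also have "\<dots> \<le> Y\<^sup>2 * log_bound"
    using ln_one_plus_le_mult[OF n_pos x] unfolding log_bound_def x_def by (intro mult_left_mono) auto
  finally show ?thesis .
qed

lemma regret_le_delay_term:
  "regret n T z y d \<eta> u \<le> \<eta> T / 2 * (vnorm n u)\<^sup>2 + Y\<^sup>2 * log_bound
    + 3 * Y\<^sup>2 * (real (sigma_max T d) + delay_term)"
proof -
  have "0 \<le> Y\<^sup>2 * delay_term" "0 \<le> real (sigma_max T d) * Y\<^sup>2" "0 \<le> Y\<^sup>2 * log_bound"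
    using delay_term_nonneg log_bound_nonneg by simp_all
  moreover have "3 * Y\<^sup>2 * (real (sigma_max T d) + delay_term)
      = 3 * (real (sigma_max T d) * Y\<^sup>2) + 3 * (Y\<^sup>2 * delay_term)"
    by (simp add: algebra_simps)
  moreover have "(\<Sum>t=1..T. (clip (rho y d t) (pred t) - y t)\<^sup>2 - (pred_undelayed t - y t)\<^sup>2)
      \<le> Y\<^sup>2 * log_bound + 5 * (Y\<^sup>2 * delay_term) + 2 * (real (sigma_max T d) * Y\<^sup>2)"
  proof (cases "sigma_max T d = 0")
    case True
    then show ?thesis
      using sum_clip_excess_le_if_no_missing \<open>0 \<le> Y\<^sup>2 * delay_term\<close> by simp
  next
    case False
    then have "real (sigma_max T d) + 1 \<le> 2 * real (sigma_max T d)" by simp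
    from mult_right_mono[OF this, of "Y\<^sup>2"]
    have "(real (sigma_max T d) + 1) * Y\<^sup>2 \<le> 2 * (real (sigma_max T d) * Y\<^sup>2)" by simp
    then show ?thesis using sum_clip_excess_le \<open>0 \<le> Y\<^sup>2 * log_bound\<close> by linarith
  qed
  ultimately show ?thesis using regret_le_clip_excess[of u] by linarith
qed

end

theorem theorem5p2:
  shows "\<exists>C::real. \<forall>(n::nat) (T::nat) (z::nat \<Rightarrow> nat \<Rightarrow> real) (y::nat \<Rightarrow> real)
      (d::nat \<Rightarrow> nat) (\<eta>::nat \<Rightarrow> real) (Y::real) (Z::real) (u::nat \<Rightarrow> real).
    1 \<le> T \<longrightarrow> 1 \<le> n \<longrightarrow>
    (\<forall>t\<in>{1..T}. t + d t \<le> T) \<longrightarrow>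
    0 \<le> Y \<longrightarrow> 0 \<le> Z \<longrightarrow>
    (\<forall>t\<in>{1..T}. vnorm n (z t) \<le> Z) \<longrightarrow>
    (\<forall>t\<in>{1..T}. \<bar>y t\<bar> \<le> Y) \<longrightarrow>
    0 < \<eta> 0 \<longrightarrow> (\<forall>t<T. \<eta> t \<le> \<eta> (Suc t)) \<longrightarrow>
    regret n T z y d \<eta> u
      \<le> \<eta> T / 2 * (vnorm n u)\<^sup>2
        + real n * Y\<^sup>2 * ln (1 + Z\<^sup>2 * real T / (\<eta> 0 * real n))
        + C * Y\<^sup>2 * (real (sigma_max T d)
             + min (real n * real (d_max T d) * ln (1 + Z\<^sup>2 * real T / (\<eta> 0 * real n)))
                   (Z\<^sup>2 * (\<Sum>t=1..T. real (card (miss d t)) / \<eta> t)))"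
proof (intro exI[of _ 3] allI impI)
  fix n T :: nat and z :: "nat \<Rightarrow> nat \<Rightarrow> real" and y :: "nat \<Rightarrow> real" and d :: "nat \<Rightarrow> nat"
    and \<eta> :: "nat \<Rightarrow> real" and Y Z :: real and u :: "nat \<Rightarrow> real"
  assume "1 \<le> n" "\<forall>t\<in>{1..T}. t + d t \<le> T" "0 \<le> Y" "\<forall>t\<in>{1..T}. vnorm n (z t) \<le> Z"
    "\<forall>t\<in>{1..T}. \<bar>y t\<bar> \<le> Y" "0 < \<eta> 0" "\<forall>t<T. \<eta> t \<le> \<eta> (Suc t)"
  then interpret delayed_vaw n T z y d \<eta> Y Z by unfold_locales
  have eqs: "real n * Y\<^sup>2 * ln (1 + Z\<^sup>2 * real T / (\<eta> 0 * real n)) = Y\<^sup>2 * log_bound"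
    "min (real n * real (d_max T d) * ln (1 + Z\<^sup>2 * real T / (\<eta> 0 * real n)))
       (Z\<^sup>2 * (\<Sum>t=1..T. real (card (miss d t)) / \<eta> t)) = delay_term"
    unfolding delay_term_def log_bound_def by (simp_all add: mult_ac)
  show "regret n T z y d \<eta> u \<le> \<eta> T / 2 * (vnorm n u)\<^sup>2
      + real n * Y\<^sup>2 * ln (1 + Z\<^sup>2 * real T / (\<eta> 0 * real n))
      + 3 * Y\<^sup>2 * (real (sigma_max T d)
         + min (real n * real (d_max T d) * ln (1 + Z\<^sup>2 * real T / (\<eta> 0 * real n)))
               (Z\<^sup>2 * (\<Sum>t=1..T. real (card (miss d t)) / \<eta> t)))"
    unfolding eqs by (rule regret_le_delay_term)
qed

end
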